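(* The category $\mathbb S^{\mathbb P}_r$, with sum $\oplus$, unit $0$, symmetries $\sigma$ and trace operator $\mathrm{tr}$, is a traced symmetric monoidal category.
   Context: Notation: $[k]=\{1,\dots,k\}$ ($[0]=\emptyset$); $T(X)=X+\mathbb R\times X+\{\exists^*,\forall^*\}$ (disjoint union); composition in diagrammatic order. $\mathbb S^{\mathbb P}_r$ has natural numbers as objects; an arrow $f:m\to n$ is a function $f:[m]\to T([n])$ satisfying realizability: if $f(i)=k\in[n]$ then for every $j\in[m]\setminus\{i\}$, $f(j)\ne k$ and $f(j)\ne(r,k)$ for all $r\in\mathbb R$. Composition of $f:m\to l$ and $g:l\to n$: $(f;g)(i)=f(i)$ if $f(i)\in\{\exists^*,\forall^*\}$; $=g(j)$ if $f(i)=j\in[l]$; $=g(j)$ if $f(i)=(r,j)$ and $g(j)\in\{\exists^*,\forall^*\}$; $=(r,k)$ if $f(i)=(r,j)$ and $g(j)=k\in[n]$; $=(r+r',k)$ if $f(i)=(r,j)$ and $g(j)=(r',k)$. Identity $\mathrm{id}_m(i)=i$. Symmetry $\sigma_{m,n}:m+n\to n+m$, $\sigma_{m,n}(i)=n+i$ for $i\le m$, $\sigma_{m,n}(m+j)=j$. Sum of $f:m\to n$ and $g:k\to l$: $(f\oplus g)(i)=f(i)$ for $i\in[m]$, and $(f\oplus g)(m+i)$ is $g(i)$ with its element $j\in[l]$ (if any) replaced by $n+j$. Trace of $f:l+m\to l+n$: for $i\in[m]$ define a sequence $v$ by $v_0=l+i$ and: if $j=0$ or $v_j\in[l]$ then $v_{j+1}=f(v_j)$;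 if $v_j=(r,k)$ with $k\in[l]$ then $v_{j+1}=f(k)$; otherwise ($j\ge1$ and $v_j\in\{l+1,..,l+n\}\cup\mathbb R\times\{l+1,..,l+n\}\cup\{\exists^*,\forall^*\}$) the sequence stops. If $v=(v_0,\dots,v_K)$ is finite, let $S$ be the sum of the first components of all $v_j\in\mathbb R\times[l+n]$, $1\le j\le K$; then $\mathrm{tr}^l_{m,n}(f)(i)=v_K$ if $v_K\in\{\exists^*,\forall^*\}$; $=k$ if $v_K=l+k$ and $v_j\in[l]$ for all $1\le j<K$; $=(S,k)$ if $v_K=l+k$ and some $v_j$, $1\le j<K$, lies in $\mathbb R\times[l]$; $=(S,k)$ if $v_K=(r,l+k)$. If $v$ is infinite, let $w'_1,w'_2,\dots$ be the first components, in order, of the (infinitely many) entries of $v$ lying in $\mathbb R\times[l]$; then $\mathrm{tr}^l_{m,n}(f)(i)=\exists^*$ if $\liminf_{N\to\infty}\frac1N\sum_{t=1}^Nw'_t\ge0$, and $\forall^*$ otherwise. *)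

theory Defs
  imports Complex_Main "HOL-Library.Extended_Real" "HOL-Library.Infinite_Set"
begin

text \<open>T(X) = X + R x X + {exists*, forall*}, instantiated at X = nat.
  An arrow f : m -> n is a function nat => tval whose values on [m] = {1..m} matter.\<close>

datatype tval = Nd nat | Wt real nat | EStar | AStar

definition in_T :: "nat \<Rightarrow> tval \<Rightarrow> bool" where
  "in_T n x = (case x of Nd k \<Rightarrow> 1 \<le> k \<and> k \<le> n | Wt r k \<Rightarrow> 1 \<le> k \<and> k \<le> n | _ \<Rightarrow> True)"

definition arr :: "nat \<Rightarrow> nat \<Rightarrow> (nat \<Rightarrow> tval) \<Rightarrow> bool" where
  "arr m n f \<longleftrightarrow>
     (\<forall>i\<in>{1..m}. in_T n (f i)) \<and>
     (\<forall>i\<in>{1..m}. \<forall>k. f i = Nd k \<longrightarrow>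
        (\<forall>j\<in>{1..m} - {i}. f j \<noteq> Nd k \<and> (\<forall>r. f j \<noteq> Wt r k)))"

definition arr_eq :: "nat \<Rightarrow> (nat \<Rightarrow> tval) \<Rightarrow> (nat \<Rightarrow> tval) \<Rightarrow> bool" where
  "arr_eq m f g \<longleftrightarrow> (\<forall>i\<in>{1..m}. f i = g i)"

text \<open>Composition in diagrammatic order: f ; g.\<close>
definition comp :: "(nat \<Rightarrow> tval) \<Rightarrow> (nat \<Rightarrow> tval) \<Rightarrow> (nat \<Rightarrow> tval)" where
  "comp f g = (\<lambda>i. case f i of
       Nd j \<Rightarrow> g j
     | Wt r j \<Rightarrow> (case g j of Nd k \<Rightarrow> Wt r k | Wt r' k \<Rightarrow> Wt (r + r') k | e \<Rightarrow> e)
     | e \<Rightarrow> e)"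

definition idA :: "nat \<Rightarrow> tval" where
  "idA = (\<lambda>i. Nd i)"

definition sym :: "nat \<Rightarrow> nat \<Rightarrow> (nat \<Rightarrow> tval)" where
  "sym m n = (\<lambda>i. if i \<le> m then Nd (n + i) else Nd (i - m))"

definition shiftT :: "nat \<Rightarrow> tval \<Rightarrow> tval" where
  "shiftT n x = (case x of Nd j \<Rightarrow> Nd (n + j) | Wt r j \<Rightarrow> Wt r (n + j) | e \<Rightarrow> e)"

definition osum :: "nat \<Rightarrow> nat \<Rightarrow> (nat \<Rightarrow> tval) \<Rightarrow> (nat \<Rightarrow> tval) \<Rightarrow> (nat \<Rightarrow> tval)" where
  "osum m n f g = (\<lambda>i. if i \<le> m then f i else shiftT n (g (i - m)))"

definition tcont :: "nat \<Rightarrow> tval \<Rightarrow> bool" where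
  "tcont l x = (case x of Nd k \<Rightarrow> 1 \<le> k \<and> k \<le> l | Wt r k \<Rightarrow> 1 \<le> k \<and> k \<le> l | _ \<Rightarrow> False)"

definition tnext :: "(nat \<Rightarrow> tval) \<Rightarrow> tval \<Rightarrow> tval" where
  "tnext f x = (case x of Nd k \<Rightarrow> f k | Wt r k \<Rightarrow> f k | e \<Rightarrow> e)"

text \<open>tseq f l i j = v_j (after stopping, the sequence is frozen at its last entry).\<close>
primrec tseq :: "(nat \<Rightarrow> tval) \<Rightarrow> nat \<Rightarrow> nat \<Rightarrow> nat \<Rightarrow> tval" where
  "tseq f l i 0 = Nd (l + i)"
| "tseq f l i (Suc j) = (if j = 0 \<or> tcont l (tseq f l i j) then tnext f (tseq f l i j) else tseq f l i j)"

definition wt_in :: "nat \<Rightarrow> tval \<Rightarrow> real" where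
  "wt_in N x = (case x of Wt r k \<Rightarrow> (if 1 \<le> k \<and> k \<le> N then r else 0) | _ \<Rightarrow> 0)"

definition trace :: "nat \<Rightarrow> nat \<Rightarrow> (nat \<Rightarrow> tval) \<Rightarrow> (nat \<Rightarrow> tval)" where
  "trace l n f = (\<lambda>i. let v = tseq f l i in
     if (\<exists>K\<ge>1. \<not> tcont l (v K)) then
       (let K = (LEAST K. K \<ge> 1 \<and> \<not> tcont l (v K));
            S = (\<Sum>j\<in>{1..K}. wt_in (l + n) (v j)) in
        case v K of
          EStar \<Rightarrow> EStar
        | AStar \<Rightarrow> AStar
        | Nd p \<Rightarrow> (if (\<exists>j\<in>{1..<K}. \<exists>r k. v j = Wt r k \<and> 1 \<le> k \<and> k \<le> l)
                   then Wt S (p - l) else Nd (p - l))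
        | Wt r p \<Rightarrow> Wt S (p - l))
     else
       (let J = {j. \<exists>r k. v j = Wt r k \<and> 1 \<le> k \<and> k \<le> l};
            w = (\<lambda>t. wt_in l (v (enumerate J t))) in
        if liminf (\<lambda>N. ereal ((\<Sum>t<Suc N. w t) / real (Suc N))) \<ge> 0 then EStar else AStar))"

text \<open>Axioms of a (strict) traced symmetric monoidal category on objects nat,
  with tensor m + n on objects, unit 0. Traces are taken on the left (first l wires).\<close>
definition traced_smc :: bool where
  "traced_smc \<longleftrightarrow>
   \<comment> \<open>category\<close>
   (\<forall>m. arr m m idA) \<and>
   (\<forall>m l n f g. arr m l f \<longrightarrow> arr l n g \<longrightarrow> arr m n (comp f g)) \<and>
   (\<forall>m n f. arr m n f \<longrightarrow> arr_eq m (comp idA f) f \<and> arr_eq m (comp f idA) f) \<and>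
   (\<forall>m l k n f g h. arr m l f \<longrightarrow> arr l k g \<longrightarrow> arr k n h \<longrightarrow>
        arr_eq m (comp (comp f g) h) (comp f (comp g h))) \<and>
   \<comment> \<open>monoidal structure (strict)\<close>
   (\<forall>m n k l f g. arr m n f \<longrightarrow> arr k l g \<longrightarrow> arr (m + k) (n + l) (osum m n f g)) \<and>
   (\<forall>m n. arr_eq (m + n) (osum m m idA idA) idA) \<and>
   (\<forall>m1 m2 m3 k1 k2 k3 f g f' g'. arr m1 m2 f \<longrightarrow> arr m2 m3 g \<longrightarrow> arr k1 k2 f' \<longrightarrow> arr k2 k3 g' \<longrightarrow>
        arr_eq (m1 + k1) (osum m1 m3 (comp f g) (comp f' g')) (comp (osum m1 m2 f f') (osum m2 m3 g g'))) \<and>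
   (\<forall>m n k l p q f g h. arr m n f \<longrightarrow> arr k l g \<longrightarrow> arr p q h \<longrightarrow>
        arr_eq (m + k + p) (osum (m + k) (n + l) (osum m n f g) h) (osum m n f (osum k l g h))) \<and>
   (\<forall>m n f. arr m n f \<longrightarrow> arr_eq m (osum m n f idA) f \<and> arr_eq m (osum 0 0 idA f) f) \<and>
   \<comment> \<open>symmetry\<close>
   (\<forall>m n. arr (m + n) (n + m) (sym m n)) \<and>
   (\<forall>m n k l f g. arr m n f \<longrightarrow> arr k l g \<longrightarrow>
        arr_eq (m + k) (comp (osum m n f g) (sym n l)) (comp (sym m k) (osum k l g f))) \<and>
   (\<forall>m n. arr_eq (m + n) (comp (sym m n) (sym n m)) idA) \<and>
   (\<forall>m n k. arr_eq (m + n + k) (sym m (n + k)) (comp (osum (m + n) (n + m) (sym m n) idA) (osum n n idA (sym m k)))) \<and>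
   \<comment> \<open>trace\<close>
   (\<forall>l m n f. arr (l + m) (l + n) f \<longrightarrow> arr m n (trace l n f)) \<and>
   (\<forall>l m m' n' n f g h. arr m m' g \<longrightarrow> arr (l + m') (l + n') f \<longrightarrow> arr n' n h \<longrightarrow>
        arr_eq m (trace l n (comp (comp (osum l l idA g) f) (osum l l idA h)))
                 (comp (comp g (trace l n' f)) h)) \<and>
   (\<forall>l l' m n f g. arr (l + m) (l' + n) f \<longrightarrow> arr l' l g \<longrightarrow>
        arr_eq m (trace l n (comp f (osum l' l g idA))) (trace l' n (comp (osum l' l g idA) f))) \<and>
   (\<forall>m n f. arr m n f \<longrightarrow> arr_eq m (trace 0 n f) f) \<and>
   (\<forall>l l' m n f. arr (l + l' + m) (l + l' + n) f \<longrightarrow>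
        arr_eq m (trace (l + l') n f) (trace l' n (trace l (l' + n) f))) \<and>
   (\<forall>l m n k p f g. arr (l + m) (l + n) f \<longrightarrow> arr k p g \<longrightarrow>
        arr_eq (m + k) (trace l (n + p) (osum (l + m) (l + n) f g)) (osum m n (trace l n f) g)) \<and>
   (\<forall>l. arr_eq l (trace l l (sym l l)) idA)"

end

theory Submission
  imports Defs
begin

(* Composition, sum and symmetry only rename and concatenate wires, so the axioms of a
   symmetric monoidal category are checked pointwise.  The trace tr^l f i is the execution
   of f from node l + i with internal nodes [l]: follow the wires while they land in [l],
   summing weights.  An infinite run is
   eventually periodic around a cycle of some weight w; realizability forces a weighted edge
   on that cycle, so the Cesaro means of the weights met along weighted edges converge to w
   divided by the number of weighted edges per period, and the verdict is the sign of w.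
   The trace axioms then follow from three properties of execution: executing the internal
   nodes C0 first and the rest of C afterwards is executing C (vanishing, sliding), and
   execution commutes with injective relabelling of the nodes (vanishing, sliding) and with
   post-composition by wires that fix the internal nodes (tightening). *)

fun has_target :: "tval \<Rightarrow> bool" where
  "has_target (Nd k) = True" | "has_target (Wt r k) = True"
| "has_target EStar = False" | "has_target AStar = False"

(* 0 is a junk value on the stars *)
fun target :: "tval \<Rightarrow> nat" where
  "target (Nd k) = k" | "target (Wt r k) = k" | "target EStar = 0" | "target AStar = 0"

fun lands_in :: "nat set \<Rightarrow> tval \<Rightarrow> bool" where
  "lands_in C (Nd k) = (k \<in> C)" | "lands_in C (Wt r k) = (k \<in> C)"
| "lands_in C EStar = False" | "lands_in C AStar = False"

fun add_weight :: "real \<Rightarrow> tval \<Rightarrow> tval" where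
  "add_weight r (Nd k) = Wt r k" | "add_weight r (Wt s k) = Wt (r + s) k"
| "add_weight r EStar = EStar" | "add_weight r AStar = AStar"

fun prepend :: "tval \<Rightarrow> tval \<Rightarrow> tval" where
  "prepend (Wt r k) e = add_weight r e" | "prepend (Nd k) e = e"
| "prepend EStar e = e" | "prepend AStar e = e"

fun relabel :: "(nat \<Rightarrow> nat) \<Rightarrow> tval \<Rightarrow> tval" where
  "relabel \<rho> (Nd k) = Nd (\<rho> k)" | "relabel \<rho> (Wt r k) = Wt r (\<rho> k)"
| "relabel \<rho> EStar = EStar" | "relabel \<rho> AStar = AStar"

definition postcomp :: "(nat \<Rightarrow> tval) \<Rightarrow> tval \<Rightarrow> tval" where
  "postcomp g x = (if has_target x then prepend x (g (target x)) else x)"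

lemma lands_in_iff: "lands_in C x \<longleftrightarrow> has_target x \<and> target x \<in> C"
  by (cases x) auto

lemma lands_in_has_target: "lands_in C x \<Longrightarrow> has_target x"
  by (cases x) auto

lemma tcont_eq_lands_in: "tcont l x = lands_in {1..l} x"
  by (cases x) (auto simp: tcont_def)

lemma in_T_iff: "in_T n x \<longleftrightarrow> (has_target x \<longrightarrow> target x \<in> {1..n})"
  by (cases x) (auto simp: in_T_def)

lemma tnext_has_target: "has_target x \<Longrightarrow> tnext f x = f (target x)"
  by (cases x) (auto simp: tnext_def)

lemma prepend_star [simp]: "prepend a EStar = EStar" "prepend a AStar = AStar"
  by (cases a; simp)+

lemma has_target_prepend [simp]: "has_target (prepend a e) = has_target e"
  by (cases a; cases e; simp)

lemma target_prepend [simp]: "target (prepend a e) = target e"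
  by (cases a; cases e; simp)

lemma lands_in_prepend [simp]: "lands_in C (prepend a e) = lands_in C e"
  by (simp add: lands_in_iff)

lemma prepend_assoc: "has_target b \<Longrightarrow> prepend a (prepend b e) = prepend (prepend a b) e"
  by (cases a; cases b; cases e; simp add: add.assoc)

lemma prepend_eq_Nd: "prepend a e = Nd p \<Longrightarrow> has_target a \<Longrightarrow> (\<exists>k. a = Nd k) \<and> e = Nd p"
  by (cases a; cases e) auto

lemma relabel_prepend_relabel:
  "has_target b \<Longrightarrow> prepend (relabel \<rho> b) (relabel \<rho> e) = relabel \<rho> (prepend b e)"
  by (cases b; cases e) auto

lemma prepend_relabel: "prepend (relabel \<rho> x) e = prepend x e"
  by (cases x) auto

lemma relabel_prepend: "prepend x (relabel \<rho> e) = relabel \<rho> (prepend x e)"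
  by (cases x; cases e) auto

lemma has_target_relabel [simp]: "has_target (relabel \<rho> x) = has_target x"
  by (cases x) auto

lemma target_relabel: "has_target x \<Longrightarrow> target (relabel \<rho> x) = \<rho> (target x)"
  by (cases x) auto

lemma lands_in_relabel: "inj \<rho> \<Longrightarrow> lands_in (\<rho> ` D) (relabel \<rho> x) = lands_in D x"
  by (cases x) (auto simp: inj_image_mem_iff)

lemma relabel_eq_Nd: "relabel \<rho> x = Nd q \<Longrightarrow> \<exists>j. x = Nd j \<and> q = \<rho> j"
  by (cases x) auto

lemma relabel_relabel: "relabel \<rho> (relabel \<sigma> x) = relabel (\<lambda>j. \<rho> (\<sigma> j)) x"
  by (cases x) auto

lemma relabel_id [simp]: "relabel (\<lambda>j. j) x = x"
  by (cases x) auto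

lemma relabel_plus_0 [simp]: "relabel ((+) 0) x = x"
  by (cases x) auto

lemma shiftT_eq_relabel: "shiftT n x = relabel ((+) n) x"
  by (cases x) (auto simp: shiftT_def)

lemma in_T_relabel_shift: "in_T l x \<Longrightarrow> in_T (n + l) (relabel ((+) n) x)"
  by (cases x) (auto simp: in_T_def)

lemma in_T_mono: "in_T n x \<Longrightarrow> n \<le> N \<Longrightarrow> in_T N x"
  by (cases x) (auto simp: in_T_def)

lemma postcomp_star [simp]: "postcomp g EStar = EStar" "postcomp g AStar = AStar"
  by (simp_all add: postcomp_def)

lemma postcomp_has_target: "has_target x \<Longrightarrow> postcomp g x = prepend x (g (target x))"
  by (simp add: postcomp_def)

lemma comp_eq_postcomp: "comp f g i = postcomp g (f i)"
  unfolding comp_def postcomp_def by (cases "f i"; cases "g (target (f i))") auto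

lemma postcomp_prepend: "has_target a \<Longrightarrow> postcomp g (prepend a e) = prepend a (postcomp g e)"
  unfolding postcomp_def by (cases a; cases e; cases "g (target e)") (auto simp: add.assoc)

lemma postcomp_fixed: "has_target a \<Longrightarrow> g (target a) = Nd (target a) \<Longrightarrow> postcomp g a = a"
  unfolding postcomp_def by (cases a) auto

lemma postcomp_postcomp: "postcomp h (postcomp g x) = postcomp (\<lambda>j. postcomp h (g j)) x"
  by (cases x; cases "g (target x)"; cases "h (target (g (target x)))") (auto simp: postcomp_def add.assoc)

lemma postcomp_relabel:
  "(has_target x \<Longrightarrow> g (target x) = Nd (\<rho> (target x))) \<Longrightarrow> postcomp g x = relabel \<rho> x"
  unfolding postcomp_def by (cases x) auto

lemma postcomp_eq_Nd: "postcomp g x = Nd k \<Longrightarrow> \<exists>j. x = Nd j \<and> g j = Nd k"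
  unfolding postcomp_def by (cases x; cases "g (target x)") (auto split: if_splits)

lemma has_target_postcomp:
  "has_target (postcomp g x) \<Longrightarrow>
     has_target x \<and> has_target (g (target x)) \<and> target (postcomp g x) = target (g (target x))"
  unfolding postcomp_def by (cases x; cases "g (target x)") (auto split: if_splits)

lemma in_T_postcomp: "in_T l x \<Longrightarrow> \<forall>j\<in>{1..l}. in_T n (g j) \<Longrightarrow> in_T n (postcomp g x)"
  unfolding postcomp_def in_T_iff by auto

lemma postcomp_cong:
  "(has_target x \<Longrightarrow> g (target x) = g' (target x)) \<Longrightarrow> postcomp g x = postcomp g' x"
  unfolding postcomp_def by auto

section \<open>Execution of a wiring\<close>

text \<open>A map \<open>\<phi> :: nat \<Rightarrow> tval\<close> is read as a set of wires whose nodes in \<open>C\<close> are internal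
  (fed back).  A run from \<open>s\<close> follows the wires while they land in \<open>C\<close>; if it is trapped
  in \<open>C\<close>, its value is decided by the sign of the weight of the cycle it ends in, which is
  what the liminf in \<open>trace\<close> computes.\<close>

inductive exits :: "(nat \<Rightarrow> tval) \<Rightarrow> nat set \<Rightarrow> nat \<Rightarrow> tval \<Rightarrow> bool" for \<phi> C where
  exits_stop: "\<not> lands_in C (\<phi> x) \<Longrightarrow> exits \<phi> C x (\<phi> x)"
| exits_step: "lands_in C (\<phi> x) \<Longrightarrow> exits \<phi> C (target (\<phi> x)) e \<Longrightarrow> exits \<phi> C x (prepend (\<phi> x) e)"

inductive reaches :: "(nat \<Rightarrow> tval) \<Rightarrow> nat set \<Rightarrow> nat \<Rightarrow> nat \<Rightarrow> bool" for \<phi> C where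
  reaches_edge: "lands_in C (\<phi> x) \<Longrightarrow> reaches \<phi> C x (target (\<phi> x))"
| reaches_step: "reaches \<phi> C x y \<Longrightarrow> lands_in C (\<phi> y) \<Longrightarrow> reaches \<phi> C x (target (\<phi> y))"

definition on_cycle :: "(nat \<Rightarrow> tval) \<Rightarrow> nat set \<Rightarrow> nat \<Rightarrow> real \<Rightarrow> bool" where
  "on_cycle \<phi> C y w \<longleftrightarrow> exits \<phi> (C - {y}) y (Wt w y) \<or> (w = 0 \<and> exits \<phi> (C - {y}) y (Nd y))"

definition cycle_verdict :: "(nat \<Rightarrow> tval) \<Rightarrow> nat set \<Rightarrow> nat \<Rightarrow> tval" where
  "cycle_verdict \<phi> C s =
     (if \<exists>y w. reaches \<phi> C s y \<and> on_cycle \<phi> C y w \<and> 0 \<le> w then EStar else AStar)"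

definition exec :: "(nat \<Rightarrow> tval) \<Rightarrow> nat set \<Rightarrow> nat \<Rightarrow> tval" where
  "exec \<phi> C s = (if \<exists>e. exits \<phi> C s e then THE e. exits \<phi> C s e else cycle_verdict \<phi> C s)"

lemma exits_unique: "exits \<phi> C x e1 \<Longrightarrow> exits \<phi> C x e2 \<Longrightarrow> e1 = e2"
proof (induction arbitrary: e2 rule: exits.induct)
  case (exits_stop x)
  from exits_stop.prems show ?case
    by cases (use exits_stop.hyps in simp_all)
next
  case (exits_step x e)
  from exits_step.prems show ?case
  proof cases
    case exits_stop
    then show ?thesis using exits_step.hyps by simp
  next
    case (exits_step e')
    then show ?thesis using exits_step.IH by simp
  qed
qed

lemma exits_not_lands_in: "exits \<phi> C x e \<Longrightarrow> \<not> lands_in C e"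
  by (induction rule: exits.induct) auto

lemma exec_eqI: "exits \<phi> C x e \<Longrightarrow> exec \<phi> C x = e"
  unfolding exec_def using exits_unique by (auto intro: the_equality)

lemma exec_diverging: "\<nexists>e. exits \<phi> C x e \<Longrightarrow> exec \<phi> C x = cycle_verdict \<phi> C x"
  by (simp add: exec_def)

lemma cycle_verdict_cases: "cycle_verdict \<phi> C s = EStar \<or> cycle_verdict \<phi> C s = AStar"
  by (simp add: cycle_verdict_def)

lemma exits_exec: "has_target (exec \<phi> C x) \<Longrightarrow> exits \<phi> C x (exec \<phi> C x)"
  using exec_eqI exec_diverging cycle_verdict_cases[of \<phi> C x] by fastforce

lemma exec_target_notin: "has_target (exec \<phi> C s) \<Longrightarrow> target (exec \<phi> C s) \<notin> C"
  using exits_exec exits_not_lands_in lands_in_iff by metis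

lemma exits_mono: "exits \<phi> D x e \<Longrightarrow> D \<subseteq> D' \<Longrightarrow> \<not> lands_in D' e \<Longrightarrow> exits \<phi> D' x e"
proof (induction rule: exits.induct)
  case (exits_stop x)
  then show ?case by (simp add: exits.exits_stop)
next
  case (exits_step x e)
  then have "lands_in D' (\<phi> x)" by (auto simp: lands_in_iff)
  then show ?case using exits_step by (auto intro: exits.exits_step)
qed

lemma exits_subset: "exits \<phi> C s e \<Longrightarrow> C0 \<subseteq> C \<Longrightarrow> \<exists>e'. exits \<phi> C0 s e'"
proof (induction rule: exits.induct)
  case (exits_stop x)
  then have "\<not> lands_in C0 (\<phi> x)" by (auto simp: lands_in_iff)
  then show ?case by (blast intro: exits.exits_stop)
next
  case (exits_step x e)
  then show ?case by (cases "lands_in C0 (\<phi> x)") (auto intro: exits.intros)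
qed

lemma exits_stepE:
  "exits \<phi> C x e \<Longrightarrow> lands_in C (\<phi> x) \<Longrightarrow> \<exists>e'. exits \<phi> C (target (\<phi> x)) e' \<and> e = prepend (\<phi> x) e'"
  by (erule exits.cases) auto

lemma reaches_in: "reaches \<phi> C x y \<Longrightarrow> y \<in> C"
  by (induction rule: reaches.induct) (auto simp: lands_in_iff)

lemma reaches_lands_in: "reaches \<phi> C x y \<Longrightarrow> lands_in C (\<phi> x)"
  by (induction rule: reaches.induct) auto

lemma reaches_trans: "reaches \<phi> C y z \<Longrightarrow> reaches \<phi> C x y \<Longrightarrow> reaches \<phi> C x z"
  by (induction rule: reaches.induct) (auto intro: reaches.intros)

lemma reaches_mono: "reaches \<phi> C x y \<Longrightarrow> C \<subseteq> C' \<Longrightarrow> reaches \<phi> C' x y"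
  by (induction rule: reaches.induct) (metis reaches.intros subsetD lands_in_iff)+

lemma reaches_first_step:
  "reaches \<phi> C x y \<Longrightarrow> lands_in C (\<phi> x) \<Longrightarrow> y = target (\<phi> x) \<or> reaches \<phi> C (target (\<phi> x)) y"
  by (induction rule: reaches.induct) (auto intro: reaches.intros)

lemma exits_reaches: "exits \<phi> D x e \<Longrightarrow> D \<subseteq> C \<Longrightarrow> lands_in C e \<Longrightarrow> reaches \<phi> C x (target e)"
proof (induction rule: exits.induct)
  case (exits_stop x)
  then show ?case by (simp add: reaches_edge)
next
  case (exits_step x e)
  then have "lands_in C (\<phi> x)" by (auto simp: lands_in_iff)
  then show ?case using exits_step reaches_edge reaches_trans by fastforce
qed

lemma on_cycle_exits: "on_cycle \<phi> C y w \<Longrightarrow> \<exists>e. exits \<phi> (C - {y}) y e \<and> has_target e \<and> target e = y"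
  unfolding on_cycle_def by (elim disjE conjE) force+

lemma on_cycle_reaches: "on_cycle \<phi> C y w \<Longrightarrow> y \<in> C \<Longrightarrow> reaches \<phi> C y y"
proof -
  assume "on_cycle \<phi> C y w" "y \<in> C"
  then obtain e where e: "exits \<phi> (C - {y}) y e" "has_target e" "target e = y" "lands_in C e"
    using on_cycle_exits by (fastforce simp: lands_in_iff)
  show ?thesis using exits_reaches[OF e(1) Diff_subset e(4)] e(3) by simp
qed

lemma on_cycle_mono: "on_cycle \<phi> C y w \<Longrightarrow> C \<subseteq> C' \<Longrightarrow> on_cycle \<phi> C' y w"
proof -
  assume "on_cycle \<phi> C y w" "C \<subseteq> C'"
  moreover have "C - {y} \<subseteq> C' - {y}" using \<open>C \<subseteq> C'\<close> by blast
  ultimately show ?thesis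
    using exits_mono[of \<phi> "C - {y}" y "Wt w y"] exits_mono[of \<phi> "C - {y}" y "Nd y"]
    unfolding on_cycle_def by auto
qed

lemma exits_or_cycle:
  "finite C \<Longrightarrow> (\<exists>e. exits \<phi> C x e) \<or> (\<exists>y w. reaches \<phi> C x y \<and> on_cycle \<phi> C y w)"
proof (induction "card C" arbitrary: C x rule: less_induct)
  case less
  show ?case
  proof (cases "lands_in C (\<phi> x)")
    case False
    then show ?thesis using exits_stop[of C \<phi> x] by blast
  next
    case True
    define k where "k = target (\<phi> x)"
    have kC: "k \<in> C" using True by (simp add: lands_in_iff k_def)
    have xk: "reaches \<phi> C x k" using True by (simp add: k_def reaches_edge)
    have "card (C - {k}) < card C" by (rule card_Diff1_less[OF less.prems kC])
    moreover have "finite (C - {k})" using less.prems by simp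
    ultimately have "(\<exists>e. exits \<phi> (C - {k}) k e) \<or> (\<exists>y w. reaches \<phi> (C - {k}) k y \<and> on_cycle \<phi> (C - {k}) y w)"
      by (rule less.hyps)
    then show ?thesis
    proof
      assume "\<exists>e. exits \<phi> (C - {k}) k e"
      then obtain e where e: "exits \<phi> (C - {k}) k e" by blast
      show ?thesis
      proof (cases "lands_in C e")
        case True
        then have "e = Nd k \<or> (\<exists>w. e = Wt w k)"
          using exits_not_lands_in[OF e] by (cases e) auto
        then have "\<exists>w. on_cycle \<phi> C k w" using e unfolding on_cycle_def by auto
        then show ?thesis using xk by blast
      next
        case False
        then have "exits \<phi> C k e" using exits_mono[OF e] by auto
        then show ?thesis using exits_step[of C \<phi> x, OF True] by (auto simp: k_def)
      qed
    next
      assume "\<exists>y w. reaches \<phi> (C - {k}) k y \<and> on_cycle \<phi> (C - {k}) y w"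
      then show ?thesis using xk reaches_trans reaches_mono[OF _ Diff_subset]
        on_cycle_mono[OF _ Diff_subset] by blast
    qed
  qed
qed

lemma cycle_verdict_step:
  assumes step: "lands_in C (\<phi> x)"
  shows "cycle_verdict \<phi> C x = cycle_verdict \<phi> C (target (\<phi> x))"
proof -
  let ?k = "target (\<phi> x)"
  have kC: "?k \<in> C" using step by (simp add: lands_in_iff)
  have "(reaches \<phi> C x y \<and> on_cycle \<phi> C y w) = (reaches \<phi> C ?k y \<and> on_cycle \<phi> C y w)" for y w
  proof
    assume a: "reaches \<phi> C x y \<and> on_cycle \<phi> C y w"
    then have "y = ?k \<or> reaches \<phi> C ?k y" using reaches_first_step step by blast
    then show "reaches \<phi> C ?k y \<and> on_cycle \<phi> C y w" using a on_cycle_reaches kC by blast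
  next
    assume "reaches \<phi> C ?k y \<and> on_cycle \<phi> C y w"
    then show "reaches \<phi> C x y \<and> on_cycle \<phi> C y w"
      using reaches_trans reaches_edge[of C \<phi> x, OF step] by blast
  qed
  then have "(\<exists>y w. reaches \<phi> C x y \<and> on_cycle \<phi> C y w \<and> 0 \<le> w)
      = (\<exists>y w. reaches \<phi> C ?k y \<and> on_cycle \<phi> C y w \<and> 0 \<le> w)"
    by blast
  then show ?thesis unfolding cycle_verdict_def by simp
qed

lemma exec_unfold:
  "exec \<phi> C x = (if lands_in C (\<phi> x) then prepend (\<phi> x) (exec \<phi> C (target (\<phi> x))) else \<phi> x)"
proof (cases "lands_in C (\<phi> x)")
  case False
  then show ?thesis using exec_eqI[OF exits_stop[of C \<phi> x, OF False]] by simp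
next
  case step: True
  show ?thesis
  proof (cases "\<exists>e. exits \<phi> C (target (\<phi> x)) e")
    case True
    then obtain e where e: "exits \<phi> C (target (\<phi> x)) e" by blast
    then show ?thesis using exec_eqI[OF e] exec_eqI[OF exits_step[OF step e]] step by simp
  next
    case False
    then have "\<nexists>e. exits \<phi> C x e" using exits_stepE step by blast
    then have "exec \<phi> C x = cycle_verdict \<phi> C (target (\<phi> x))"
      using exec_diverging cycle_verdict_step[of C \<phi> x, OF step] by simp
    moreover have "exec \<phi> C (target (\<phi> x)) = cycle_verdict \<phi> C (target (\<phi> x))"
      using exec_diverging False by simp
    ultimately show ?thesis
      using step cycle_verdict_cases[of \<phi> C "target (\<phi> x)"] by auto
  qed
qed

lemma exec_stop: "\<not> lands_in C (\<phi> s) \<Longrightarrow> exec \<phi> C s = \<phi> s"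
  by (subst exec_unfold) simp

lemma exec_step: "lands_in C (\<phi> s) \<Longrightarrow> exec \<phi> C s = prepend (\<phi> s) (exec \<phi> C (target (\<phi> s)))"
  by (subst exec_unfold) simp

section \<open>Eventually periodic sequences\<close>

lemma eventually_periodic_reduce:
  fixes x :: "nat \<Rightarrow> 'a"
  assumes per: "\<forall>t\<ge>a. x (t + p) = x t" and p: "0 < p" and t: "a \<le> t"
  shows "\<exists>j\<in>{a..<a+p}. x t = x j"
  using t
proof (induction t rule: less_induct)
  case (less t)
  show ?case
  proof (cases "t < a + p")
    case True
    then show ?thesis using less.prems by auto
  next
    case False
    then have "a \<le> t - p" "t - p < t" "t - p + p = t" using p by auto
    then show ?thesis using less.IH per by metis
  qed
qed

lemma eventually_periodic_add_mult:
  fixes x :: "nat \<Rightarrow> 'a"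
  assumes per: "\<forall>t\<ge>a. x (t + p) = x t" and t: "a \<le> t"
  shows "x (t + k * p) = x t"
proof (induction k)
  case (Suc k)
  have "x (t + k * p + p) = x (t + k * p)" using per t by simp
  moreover have "t + Suc k * p = t + k * p + p" by simp
  ultimately show ?case using Suc.IH by metis
qed simp

lemma periodic_window_sum:
  fixes x :: "nat \<Rightarrow> real"
  assumes per: "\<forall>t\<ge>a. x (t + p) = x t" and ab: "a \<le> b"
  shows "(\<Sum>t\<in>{b..<b+p}. x t) = (\<Sum>t\<in>{a..<a+p}. x t)"
  using ab
proof (induction b rule: dec_induct)
  case (step n)
  show ?case
  proof (cases "p = 0")
    case False
    have "(\<Sum>t\<in>{n..<Suc (n + p)}. x t) = x n + (\<Sum>t\<in>{Suc n..<Suc (n+p)}. x t)"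
      using False by (intro sum.atLeast_Suc_lessThan) simp
    moreover have "(\<Sum>t\<in>{n..<Suc (n + p)}. x t) = (\<Sum>t\<in>{n..<n+p}. x t) + x (n + p)"
      by (intro sum.atLeastLessThan_Suc) simp
    moreover have "x (n + p) = x n" using per step.hyps(1) by simp
    ultimately show ?thesis using step.IH by simp
  qed simp
qed simp

lemma periodic_window_sum_mult:
  fixes x :: "nat \<Rightarrow> real"
  assumes per: "\<forall>t\<ge>a. x (t + p) = x t" and ab: "a \<le> b"
  shows "(\<Sum>t\<in>{b..<b+k*p}. x t) = real k * (\<Sum>t\<in>{a..<a+p}. x t)"
proof (induction k)
  case (Suc k)
  have "b + Suc k * p = b + k * p + p" by simp
  then have "(\<Sum>t\<in>{b..<b+Suc k*p}. x t) = (\<Sum>t\<in>{b..<b+k*p}. x t) + (\<Sum>t\<in>{b+k*p..<b+k*p+p}. x t)"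
    by (simp only:) (rule sum.atLeastLessThan_concat[symmetric]; simp)
  also have "(\<Sum>t\<in>{b+k*p..<b+k*p+p}. x t) = (\<Sum>t\<in>{a..<a+p}. x t)"
    using periodic_window_sum[OF per, of "b + k*p"] ab by simp
  finally show ?case using Suc.IH by (simp add: algebra_simps)
qed simp

text \<open>Both windows tile a common multiple of the two periods.\<close>

lemma periodic_window_sum_sign:
  fixes x :: "nat \<Rightarrow> real"
  assumes per: "\<forall>t\<ge>a. x (t + p) = x t" "0 < p"
    and per': "\<forall>t\<ge>a'. x (t + p') = x t" "0 < p'"
  shows "(0 \<le> (\<Sum>t\<in>{a..<a+p}. x t)) = (0 \<le> (\<Sum>t\<in>{a'..<a'+p'}. x t))"
proof -
  let ?b = "max a a'"
  have "real p' * (\<Sum>t\<in>{a..<a+p}. x t) = (\<Sum>t\<in>{?b..<?b+p'*p}. x t)"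
    using periodic_window_sum_mult[OF per(1), of ?b p'] by simp
  also have "\<dots> = real p * (\<Sum>t\<in>{a'..<a'+p'}. x t)"
    using periodic_window_sum_mult[OF per'(1), of ?b p] by (simp add: mult.commute)
  finally have "real p' * (\<Sum>t\<in>{a..<a+p}. x t) = real p * (\<Sum>t\<in>{a'..<a'+p'}. x t)" .
  moreover have "(0 \<le> (\<Sum>t\<in>{a..<a+p}. x t)) = (0 \<le> real p' * (\<Sum>t\<in>{a..<a+p}. x t))"
    using per'(2) by (simp add: zero_le_mult_iff)
  moreover have "(0 \<le> (\<Sum>t\<in>{a'..<a'+p'}. x t)) = (0 \<le> real p * (\<Sum>t\<in>{a'..<a'+p'}. x t))"
    using per(2) by (simp add: zero_le_mult_iff)
  ultimately show ?thesis by simp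
qed

lemma cesaro_eventually_periodic:
  fixes x :: "nat \<Rightarrow> real"
  assumes per: "\<forall>t\<ge>a. x (t + p) = x t" and p: "0 < p"
  shows "(\<lambda>E. (\<Sum>t<E. x t) / real E) \<longlonglongrightarrow> (\<Sum>t\<in>{a..<a+p}. x t) / real p"
proof -
  define A where "A = (\<Sum>t\<in>{a..<a+p}. x t)"
  define h where "h E = (\<Sum>t<E. x t) - A * real E / real p" for E
  have h_per: "\<forall>E\<ge>a. h (E + p) = h E"
  proof (intro allI impI)
    fix E assume "a \<le> E"
    have "(\<Sum>t<E + p. x t) = (\<Sum>t<E. x t) + (\<Sum>t\<in>{E..<E+p}. x t)"
      by (simp add: sum.atLeastLessThan_concat[symmetric] lessThan_atLeast0)
    also have "(\<Sum>t\<in>{E..<E+p}. x t) = A" unfolding A_def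
      by (rule periodic_window_sum[OF per \<open>a \<le> E\<close>])
    finally show "h (E + p) = h E" unfolding h_def using p by (simp add: field_simps)
  qed
  define M where "M = Max ((\<lambda>E. \<bar>h E\<bar>) ` {a..<a+p})"
  have bound: "\<bar>h E\<bar> \<le> M" if "a \<le> E" for E
    using eventually_periodic_reduce[OF h_per p that] unfolding M_def by (auto intro: Max_ge)
  have "(\<lambda>E. h E / real E) \<longlonglongrightarrow> 0"
  proof (rule tendsto_0_le[where K = M])
    show "(\<lambda>E. 1 / real E) \<longlonglongrightarrow> 0" by (rule lim_const_over_n)
    have "norm (h E / real E) \<le> norm (1 / real E) * M" if "a \<le> E" "0 < E" for E
      using bound[OF that(1)] that(2) by (simp add: divide_right_mono)
    then show "eventually (\<lambda>E. norm (h E / real E) \<le> norm (1 / real E) * M) sequentially"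
      unfolding eventually_sequentially by (metis max.boundedE less_le_trans zero_less_one)
  qed
  then have "(\<lambda>E. A / real p + h E / real E) \<longlonglongrightarrow> A / real p"
    using tendsto_add[OF tendsto_const] by fastforce
  moreover have "eventually (\<lambda>E. A / real p + h E / real E = (\<Sum>t<E. x t) / real E) sequentially"
    unfolding eventually_sequentially
      by (intro exI[of _ 1] allI impI) (auto simp: h_def field_simps)
  ultimately show ?thesis unfolding A_def by (rule Lim_transform_eventually)
qed

lemma enumerate_below:
  fixes J :: "nat set"
  assumes "infinite J"
  shows "{j\<in>J. j < enumerate J N} = enumerate J ` {..<N}"
proof
  show "{j\<in>J. j < enumerate J N} \<subseteq> enumerate J ` {..<N}"
  proof
    fix j assume "j \<in> {j\<in>J. j < enumerate J N}"
    then obtain t where "enumerate J t = j" "enumerate J t < enumerate J N"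
      using enumerate_Ex[OF assms] by auto
    then show "j \<in> enumerate J ` {..<N}" using enumerate_mono_iff[OF assms] by blast
  qed
qed (use assms enumerate_in_set[OF assms] in auto)

lemma sum_enumerate:
  fixes J :: "nat set" and c :: "nat \<Rightarrow> real"
  assumes J: "infinite J" and c: "\<forall>j. j \<notin> J \<longrightarrow> c j = 0"
  shows "(\<Sum>t<N. c (enumerate J t)) = (\<Sum>j<enumerate J N. c j)"
proof -
  have "(\<Sum>j<enumerate J N. c j) = (\<Sum>j\<in>{j\<in>J. j < enumerate J N}. c j)"
    using c by (intro sum.mono_neutral_right) auto
  also have "\<dots> = (\<Sum>t<N. c (enumerate J t))"
    using inj_enumerate[OF J] by (simp add: enumerate_below[OF J] sum.reindex inj_on_def)
  finally show ?thesis by simp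
qed

lemma cesaro_enumerate_eventually_periodic:
  fixes c :: "nat \<Rightarrow> real"
  assumes c_per: "\<forall>t\<ge>a. c (t + p) = c t" and J_per: "\<forall>t\<ge>a. (t + p \<in> J) = (t \<in> J)"
    and p: "0 < p" and J_window: "\<exists>j\<in>{a..<a+p}. j \<in> J" and c: "\<forall>j. j \<notin> J \<longrightarrow> c j = 0"
  shows "(\<lambda>N. (\<Sum>t<Suc N. c (enumerate J t)) / real (Suc N)) \<longlonglongrightarrow>
           (\<Sum>t\<in>{a..<a+p}. c t) / card (J \<inter> {a..<a+p})"
proof -
  define d where "d t = (if t \<in> J then 1 else 0 :: real)" for t
  have d_per: "\<forall>t\<ge>a. d (t + p) = d t" using J_per by (simp add: d_def)
  have d_window: "(\<Sum>t\<in>{a..<a+p}. d t) = card (J \<inter> {a..<a+p})"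
    unfolding d_def by (simp add: sum.If_cases Int_commute)
  have Q: "0 < card (J \<inter> {a..<a+p})" using J_window by (auto simp: card_gt_0_iff)
  obtain j0 where j0: "j0 \<in> J" "a \<le> j0" using J_window by auto
  have J: "infinite J"
  proof
    assume "finite J"
    then obtain B where "\<forall>j\<in>J. j < B" using finite_nat_set_iff_bounded by blast
    moreover have "j0 + B * p \<in> J"
      using eventually_periodic_add_mult[of a "\<lambda>t. t \<in> J" p j0 B] J_per j0 by simp
    moreover have "B \<le> j0 + B * p" using p by (cases p) auto
    ultimately show False by fastforce
  qed
  have lim: "(\<lambda>E. ((\<Sum>t<E. c t) / real E) / ((\<Sum>t<E. d t) / real E)) \<longlonglongrightarrow>
      ((\<Sum>t\<in>{a..<a+p}. c t) / real p) / (card (J \<inter> {a..<a+p}) / real p)"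
    using cesaro_eventually_periodic[OF d_per p] Q p unfolding d_window
    by (intro tendsto_divide[OF cesaro_eventually_periodic[OF c_per p]]) auto
  have "filterlim (\<lambda>N. enumerate J (Suc N)) sequentially sequentially"
    using filterlim_subseq[of "enumerate J"] filterlim_Suc filterlim_compose J
    by (metis enumerate_step strict_mono_Suc_iff)
  from filterlim_compose[OF lim this]
  have "(\<lambda>N. ((\<Sum>t<enumerate J (Suc N). c t) / real (enumerate J (Suc N))) /
          ((\<Sum>t<enumerate J (Suc N). d t) / real (enumerate J (Suc N))))
        \<longlonglongrightarrow> (\<Sum>t\<in>{a..<a+p}. c t) / card (J \<inter> {a..<a+p})"
    using p by simp
  moreover have "(\<Sum>t<enumerate J (Suc N). d t) = real (Suc N)" for N
    using sum_enumerate[OF J, of d "Suc N"] enumerate_in_set[OF J] by (simp add: d_def)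
  moreover have "(\<Sum>t<enumerate J (Suc N). c t) = (\<Sum>t<Suc N. c (enumerate J t))" for N
    using sum_enumerate[OF J c] by simp
  moreover have "0 < enumerate J (Suc N)" for N
    using le_enumerate[OF J, of "Suc N"] by simp
  ultimately show ?thesis by simp
qed

primrec walk :: "(nat \<Rightarrow> tval) \<Rightarrow> nat \<Rightarrow> nat \<Rightarrow> tval" where
  "walk \<phi> x 0 = Nd x" | "walk \<phi> x (Suc j) = tnext \<phi> (walk \<phi> x j)"

definition is_weighted :: "tval \<Rightarrow> bool" where
  "is_weighted x \<longleftrightarrow> (\<exists>r k. x = Wt r k)"

fun weight :: "tval \<Rightarrow> real" where
  "weight (Wt r k) = r" | "weight (Nd k) = 0" | "weight EStar = 0" | "weight AStar = 0"

fun with_weight :: "bool \<Rightarrow> real \<Rightarrow> tval \<Rightarrow> tval" where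
  "with_weight b S (Nd p) = (if b then Wt S p else Nd p)" | "with_weight b S (Wt r p) = Wt S p"
| "with_weight b S EStar = EStar" | "with_weight b S AStar = AStar"

text \<open>Mirrors the finite case of \<open>trace\<close>.\<close>

definition walk_result :: "(nat \<Rightarrow> tval) \<Rightarrow> nat \<Rightarrow> tval" where
  "walk_result v K = with_weight (\<exists>j\<in>{1..K}. is_weighted (v j)) (\<Sum>j=1..K. weight (v j)) (v K)"

declare walk.simps(2) [simp del]

lemma is_weighted_simps [simp]:
  "is_weighted (Wt r k)" "\<not> is_weighted (Nd k)" "\<not> is_weighted EStar" "\<not> is_weighted AStar"
  by (auto simp: is_weighted_def)

lemma weight_unweighted: "\<not> is_weighted x \<Longrightarrow> weight x = 0"
  by (cases x) auto

lemma walk_1 [simp]: "walk \<phi> x (Suc 0) = \<phi> x"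
  by (simp add: walk.simps(2) tnext_def)

lemma walk_Suc_has_target: "has_target (walk \<phi> x j) \<Longrightarrow> walk \<phi> x (Suc j) = \<phi> (target (walk \<phi> x j))"
  by (simp add: walk.simps(2) tnext_has_target)

lemma walk_shift:
  assumes "has_target (walk \<phi> x j)" "0 < t"
  shows "walk \<phi> x (j + t) = walk \<phi> (target (walk \<phi> x j)) t"
  using assms(2)
proof (induction t)
  case (Suc t)
  then show ?case using assms(1) by (cases "t = 0") (simp_all add: walk.simps(2) tnext_has_target)
qed simp

lemma walk_shift_1: "has_target (\<phi> x) \<Longrightarrow> 0 < t \<Longrightarrow> walk \<phi> x (Suc t) = walk \<phi> (target (\<phi> x)) t"
  using walk_shift[of \<phi> x "Suc 0" t] by simp

lemma walk_result_1: "walk_result v (Suc 0) = v (Suc 0)"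
  unfolding walk_result_def by (cases "v (Suc 0)") auto

lemma walk_result_Suc:
  assumes a: "has_target (\<phi> x)" and K: "0 < K"
  shows "walk_result (walk \<phi> x) (Suc K) = prepend (\<phi> x) (walk_result (walk \<phi> (target (\<phi> x))) K)"
proof -
  let ?v = "walk \<phi> x" and ?w = "walk \<phi> (target (\<phi> x))"
  have sh: "?v (Suc t) = ?w t" if "0 < t" for t using walk_shift_1[of \<phi> x, OF a that] .
  have "(\<Sum>j=1..Suc K. weight (?v j)) = weight (?v 1) + (\<Sum>j=Suc 1..Suc K. weight (?v j))"
    by (rule sum.atLeast_Suc_atMost) simp
  also have "(\<Sum>j=Suc 1..Suc K. weight (?v j)) = (\<Sum>j=1..K. weight (?v (Suc j)))"
    by (rule sum.shift_bounds_cl_Suc_ivl)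
  also have "\<dots> = (\<Sum>j=1..K. weight (?w j))"
    by (rule sum.cong) (auto simp: sh)
  finally have S: "(\<Sum>j=1..Suc K. weight (?v j)) = weight (\<phi> x) + (\<Sum>j=1..K. weight (?w j))"
    by simp
  have B: "(\<exists>j\<in>{1..Suc K}. is_weighted (?v j)) = (is_weighted (\<phi> x) \<or> (\<exists>j\<in>{1..K}. is_weighted (?w j)))"
  proof
    assume "\<exists>j\<in>{1..Suc K}. is_weighted (?v j)"
    then obtain j where j: "j \<in> {1..Suc K}" "is_weighted (?v j)" by blast
    show "is_weighted (\<phi> x) \<or> (\<exists>j\<in>{1..K}. is_weighted (?w j))"
    proof (cases "j = 1")
      case False
      then obtain j' where "j = Suc j'" "j' \<in> {1..K}" using j(1) by (cases j) auto
      then show ?thesis using j(2) sh[of j'] by auto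
    qed (use j in simp)
  next
    assume "is_weighted (\<phi> x) \<or> (\<exists>j\<in>{1..K}. is_weighted (?w j))"
    then show "\<exists>j\<in>{1..Suc K}. is_weighted (?v j)"
    proof
      assume "\<exists>j\<in>{1..K}. is_weighted (?w j)"
      then obtain j where "j \<in> {1..K}" "is_weighted (?w j)" by blast
      then show ?thesis using sh[of j] by (intro bexI[of _ "Suc j"]) auto
    qed (use K in \<open>auto intro: bexI[of _ 1]\<close>)
  qed
  have "\<not> (\<exists>j\<in>{1..K}. is_weighted (?w j)) \<Longrightarrow> (\<Sum>j=1..K. weight (?w j)) = 0"
    by (simp add: weight_unweighted)
  then show ?thesis
    unfolding walk_result_def S B using a K sh[of K] by (cases "\<phi> x"; cases "?w K") auto
qed

lemma exits_walk:
  "exits \<phi> D x e \<Longrightarrow>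
     \<exists>K>0. (\<forall>t\<in>{1..<K}. lands_in D (walk \<phi> x t)) \<and> \<not> lands_in D (walk \<phi> x K) \<and> e = walk_result (walk \<phi> x) K"
proof (induction rule: exits.induct)
  case (exits_stop x)
  then show ?case by (intro exI[of _ 1]) (simp add: walk_result_1)
next
  case (exits_step x e)
  then obtain K where K: "0 < K" "\<forall>t\<in>{1..<K}. lands_in D (walk \<phi> (target (\<phi> x)) t)"
    "\<not> lands_in D (walk \<phi> (target (\<phi> x)) K)" "e = walk_result (walk \<phi> (target (\<phi> x))) K"
    by blast
  have a: "has_target (\<phi> x)" using exits_step.hyps(1) by (rule lands_in_has_target)
  have sh: "walk \<phi> x (Suc t) = walk \<phi> (target (\<phi> x)) t" if "0 < t" for t
    using walk_shift_1[of \<phi> x, OF a that] .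
  have "\<forall>t\<in>{1..<Suc K}. lands_in D (walk \<phi> x t)"
  proof
    fix t assume t: "t \<in> {1..<Suc K}"
    show "lands_in D (walk \<phi> x t)"
    proof (cases "t = 1")
      case True
      then show ?thesis using exits_step.hyps(1) by simp
    next
      case False
      then obtain t' where "t = Suc t'" "t' \<in> {1..<K}" using t by (cases t) auto
      then show ?thesis using K(2) sh[of t'] by auto
    qed
  qed
  moreover have "\<not> lands_in D (walk \<phi> x (Suc K))" using K sh by simp
  moreover have "prepend (\<phi> x) e = walk_result (walk \<phi> x) (Suc K)"
    using walk_result_Suc[of \<phi> x, OF a K(1)] K(4) by simp
  ultimately show ?case by (intro exI[of _ "Suc K"]) auto
qed

lemma walk_exits:
  "0 < K \<Longrightarrow> \<forall>t\<in>{1..<K}. lands_in D (walk \<phi> x t) \<Longrightarrow> \<not> lands_in D (walk \<phi> x K) \<Longrightarrow>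
     exits \<phi> D x (walk_result (walk \<phi> x) K)"
proof (induction K arbitrary: x)
  case (Suc K)
  show ?case
  proof (cases "K = 0")
    case True
    then show ?thesis using Suc.prems exits_stop[of D \<phi> x] by (simp add: walk_result_1)
  next
    case False
    then have "1 \<in> {1..<Suc K}" by simp
    then have step: "lands_in D (\<phi> x)" using Suc.prems(2) by (metis walk_1 One_nat_def)
    have a: "has_target (\<phi> x)" using step by (rule lands_in_has_target)
    have sh: "walk \<phi> x (Suc t) = walk \<phi> (target (\<phi> x)) t" if "0 < t" for t
      using walk_shift_1[of \<phi> x, OF a that] .
    have "\<forall>t\<in>{1..<K}. lands_in D (walk \<phi> (target (\<phi> x)) t)"
    proof
      fix t assume "t \<in> {1..<K}"
      then have "Suc t \<in> {1..<Suc K}" by simp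
      then have "lands_in D (walk \<phi> x (Suc t))" using Suc.prems(2) by blast
      then show "lands_in D (walk \<phi> (target (\<phi> x)) t)" using sh[of t] \<open>t \<in> {1..<K}\<close> by simp
    qed
    moreover have "\<not> lands_in D (walk \<phi> (target (\<phi> x)) K)" using Suc.prems(3) sh[of K] False by simp
    ultimately have "exits \<phi> D (target (\<phi> x)) (walk_result (walk \<phi> (target (\<phi> x))) K)"
      using Suc.IH False by simp
    from exits_step[OF step this] show ?thesis using walk_result_Suc[of \<phi> x, OF a] False by simp
  qed
qed simp

lemma reaches_walk:
  "reaches \<phi> C x y \<Longrightarrow> \<exists>j>0. (\<forall>t\<in>{1..j}. lands_in C (walk \<phi> x t)) \<and> target (walk \<phi> x j) = y"
proof (induction rule: reaches.induct)
  case (reaches_edge x)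
  then show ?case by (intro exI[of _ 1]) auto
next
  case (reaches_step x y)
  then obtain j where j: "0 < j" "\<forall>t\<in>{1..j}. lands_in C (walk \<phi> x t)" "target (walk \<phi> x j) = y"
    by blast
  have "has_target (walk \<phi> x j)" using j by (intro lands_in_has_target[of C]) auto
  then have "walk \<phi> x (Suc j) = \<phi> y" using j(3) by (simp add: walk_Suc_has_target)
  then show ?case using j reaches_step.hyps(2) by (intro exI[of _ "Suc j"]) (auto simp: le_Suc_eq)
qed

lemma walk_result_weight_sum:
  "walk_result v K = Wt w p \<Longrightarrow> (\<Sum>j=1..K. weight (v j)) = w"
  "walk_result v K = Nd p \<Longrightarrow> (\<Sum>j=1..K. weight (v j)) = 0"
  unfolding walk_result_def by (cases "v K"; auto split: if_splits simp: weight_unweighted)+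

lemma on_cycle_periodic_walk:
  assumes "reaches \<phi> C s y" and "on_cycle \<phi> C y w"
  shows "\<exists>a p. 0 < p \<and> (\<forall>t\<ge>a. walk \<phi> s (t + p) = walk \<phi> s t) \<and> (\<Sum>t\<in>{a..<a+p}. weight (walk \<phi> s t)) = w"
proof -
  obtain j where j: "0 < j" "\<forall>t\<in>{1..j}. lands_in C (walk \<phi> s t)" "target (walk \<phi> s j) = y"
    using reaches_walk[OF assms(1)] by blast
  have ij: "has_target (walk \<phi> s j)" using j by (intro lands_in_has_target[of C]) auto
  obtain e where e: "exits \<phi> (C - {y}) y e" "e = Wt w y \<or> (e = Nd y \<and> w = 0)"
    using assms(2) unfolding on_cycle_def by blast
  obtain K where K: "0 < K" "e = walk_result (walk \<phi> y) K"
    using exits_walk[OF e(1)] by blast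
  have iK: "has_target (walk \<phi> y K)" "target (walk \<phi> y K) = y"
    using e(2) K(2) by (cases "walk \<phi> y K"; auto simp: walk_result_def split: if_splits)+
  have sw: "(\<Sum>t=1..K. weight (walk \<phi> y t)) = w"
    using e(2) K(2) walk_result_weight_sum by metis
  have shs: "walk \<phi> s (j + t) = walk \<phi> y t" if "0 < t" for t
    using walk_shift[OF ij that] j(3) by simp
  have shy: "walk \<phi> y (K + t) = walk \<phi> y t" if "0 < t" for t
    using walk_shift[OF iK(1) that] iK(2) by simp
  have per: "\<forall>t\<ge>Suc j. walk \<phi> s (t + K) = walk \<phi> s t"
  proof (intro allI impI)
    fix t assume "Suc j \<le> t"
    then obtain t' where t': "t = j + t'" "0 < t'" by (intro that[of "t - j"]) auto
    have "walk \<phi> s (t + K) = walk \<phi> s (j + (t' + K))" using t' by (simp add: add.assoc)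
    also have "\<dots> = walk \<phi> y (t' + K)" using shs t' by simp
    also have "\<dots> = walk \<phi> y t'" using shy[of t'] t' by (simp add: add.commute)
    also have "\<dots> = walk \<phi> s t" using shs t' by simp
    finally show "walk \<phi> s (t + K) = walk \<phi> s t" .
  qed
  have "(\<Sum>t\<in>{Suc j..<Suc j + K}. weight (walk \<phi> s t)) = (\<Sum>t\<in>{1..<Suc K}. weight (walk \<phi> s (t + j)))"
    using sum.shift_bounds_nat_ivl[of "\<lambda>t. weight (walk \<phi> s t)" 1 j "Suc K"]
      by (simp add: add.commute)
  also have "\<dots> = w"
    using shs sw by (simp add: atLeastLessThanSuc_atLeastAtMost add.commute)
  finally show ?thesis using per K(1) by blast
qed

lemma on_cycle_sign:
  assumes "reaches \<phi> C s y1" "on_cycle \<phi> C y1 w1" "reaches \<phi> C s y2" "on_cycle \<phi> C y2 w2"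
  shows "(0 \<le> w1) = (0 \<le> w2)"
proof -
  obtain a p where A: "0 < p" "\<forall>t\<ge>a. walk \<phi> s (t + p) = walk \<phi> s t"
      "(\<Sum>t\<in>{a..<a+p}. weight (walk \<phi> s t)) = w1"
    using on_cycle_periodic_walk[OF assms(1,2)] by blast
  obtain a' p' where B: "0 < p'" "\<forall>t\<ge>a'. walk \<phi> s (t + p') = walk \<phi> s t"
      "(\<Sum>t\<in>{a'..<a'+p'}. weight (walk \<phi> s t)) = w2"
    using on_cycle_periodic_walk[OF assms(3,4)] by blast
  show ?thesis
    using periodic_window_sum_sign[of a "\<lambda>t. weight (walk \<phi> s t)" p a' p'] A B by simp
qed

lemma cycle_verdict_eq:
  "reaches \<phi> C s y \<Longrightarrow> on_cycle \<phi> C y w \<Longrightarrow> cycle_verdict \<phi> C s = (if 0 \<le> w then EStar else AStar)"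
proof -
  assume yw: "reaches \<phi> C s y" "on_cycle \<phi> C y w"
  then have "(\<exists>y w. reaches \<phi> C s y \<and> on_cycle \<phi> C y w \<and> 0 \<le> w) = (0 \<le> w)"
    using on_cycle_sign[OF yw] by blast
  then show ?thesis unfolding cycle_verdict_def by simp
qed

section \<open>Nested execution\<close>

lemma exec_exits_prefix:
  "exits \<phi> C0 s x \<Longrightarrow> C0 \<subseteq> C \<Longrightarrow> lands_in C x \<Longrightarrow> exec \<phi> C s = prepend x (exec \<phi> C (target x))"
proof (induction rule: exits.induct)
  case (exits_stop s)
  then show ?case using exec_unfold[of \<phi> C s] by simp
next
  case (exits_step s e)
  have t: "lands_in C (\<phi> s)"
    using exits_step.hyps(1) exits_step.prems(1) by (auto simp: lands_in_iff)
  have ie: "has_target e" using exits_step.prems(2) lands_in_has_target by simp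
  have "exec \<phi> C s = prepend (\<phi> s) (exec \<phi> C (target (\<phi> s)))" using exec_unfold[of \<phi> C s] t by simp
  also have "\<dots> = prepend (\<phi> s) (prepend e (exec \<phi> C (target e)))" using exits_step by simp
  also have "\<dots> = prepend (prepend (\<phi> s) e) (exec \<phi> C (target e))" using prepend_assoc[OF ie] by simp
  finally show ?case by simp
qed

lemma exits_prepend_source:
  assumes f: "exits \<psi> D k e" and h: "\<psi> s = prepend a (\<psi> k)"
  shows "exits \<psi> D s (prepend a e)"
  using f
proof cases
  case exits_stop
  then have "\<not> lands_in D (\<psi> s)" using h by simp
  then show ?thesis using exits.exits_stop[of D \<psi> s] h exits_stop by simp
next
  case (exits_step e')
  have ib: "has_target (\<psi> k)" using exits_step lands_in_has_target by blast
  have "lands_in D (\<psi> s)" using h exits_step by simp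
  moreover have "target (\<psi> s) = target (\<psi> k)" using h by simp
  ultimately have "exits \<psi> D s (prepend (\<psi> s) e')"
    using exits.exits_step[of D \<psi> s e'] exits_step by simp
  then show ?thesis using h exits_step prepend_assoc[OF ib] by simp
qed

lemma exits_nested: "exits \<phi> C s e \<Longrightarrow> C0 \<subseteq> C \<Longrightarrow> exits (exec \<phi> C0) (C - C0) s e"
proof (induction rule: exits.induct)
  case (exits_stop s)
  then have "\<not> lands_in C0 (\<phi> s)" by (auto simp: lands_in_iff)
  then have w: "exec \<phi> C0 s = \<phi> s" using exec_unfold[of \<phi> C0 s] by simp
  have "\<not> lands_in (C - C0) (\<phi> s)" using exits_stop.hyps by (auto simp: lands_in_iff)
  then show ?case using exits.exits_stop[of "C - C0" "exec \<phi> C0" s] w by simp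
next
  case (exits_step s e)
  let ?k = "target (\<phi> s)"
  have IH: "exits (exec \<phi> C0) (C - C0) ?k e" using exits_step by simp
  show ?case
  proof (cases "?k \<in> C0")
    case True
    then have "lands_in C0 (\<phi> s)" using exits_step.hyps(1) by (auto simp: lands_in_iff)
    then have "exec \<phi> C0 s = prepend (\<phi> s) (exec \<phi> C0 ?k)" using exec_unfold[of \<phi> C0 s] by simp
    then show ?thesis using exits_prepend_source[OF IH] by simp
  next
    case False
    then have "\<not> lands_in C0 (\<phi> s)" by (auto simp: lands_in_iff)
    then have w: "exec \<phi> C0 s = \<phi> s" using exec_unfold[of \<phi> C0 s] by simp
    have "lands_in (C - C0) (exec \<phi> C0 s)"
      using w False exits_step.hyps(1) by (auto simp: lands_in_iff)
    from exits.exits_step[of "C - C0" "exec \<phi> C0" s e, OF this] IH w show ?thesis by simp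
  qed
qed

lemma exec_eq_if_exits_nested: "exits \<psi> (C - C0) s e \<Longrightarrow> \<psi> = exec \<phi> C0 \<Longrightarrow> C0 \<subseteq> C \<Longrightarrow> finite C \<Longrightarrow> exec \<phi> C s = e"
proof (induction rule: exits.induct)
  case (exits_stop s)
  show ?case
  proof (cases "\<exists>e'. exits \<phi> C0 s e'")
    case True
    then obtain e' where e': "exits \<phi> C0 s e'" by blast
    then have ps: "\<psi> s = e'" using exec_eqI exits_stop.prems by simp
    have "\<not> lands_in C0 e'" using exits_not_lands_in[OF e'] .
    then have "\<not> lands_in C e'" using exits_stop.hyps ps by (auto simp: lands_in_iff)
    then have "exits \<phi> C s e'" using exits_mono[OF e' exits_stop.prems(2)] by simp
    then show ?thesis using exec_eqI ps by simp
  next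
    case False
    then have ps: "\<psi> s = cycle_verdict \<phi> C0 s" using exec_diverging exits_stop.prems by simp
    have nf: "\<not> (\<exists>e. exits \<phi> C s e)" using False exits_subset exits_stop.prems(2) by blast
    have fC0: "finite C0" using exits_stop.prems finite_subset by blast
    obtain y w where yw: "reaches \<phi> C0 s y" "on_cycle \<phi> C0 y w"
      using exits_or_cycle[OF fC0, of \<phi> s] False by blast
    have yw2: "reaches \<phi> C s y" "on_cycle \<phi> C y w"
      using reaches_mono[OF yw(1)] on_cycle_mono[OF yw(2)] exits_stop.prems(2) by simp_all
    show ?thesis
      using exec_diverging[OF nf] ps cycle_verdict_eq[OF yw(1,2)] cycle_verdict_eq[OF yw2(1,2)]
      by simp
  qed
next
  case (exits_step s e)
  let ?b = "\<psi> s"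
  have ib: "has_target ?b" using exits_step.hyps(1) lands_in_has_target by blast
  then have "exits \<phi> C0 s ?b" using exits_exec[of \<phi> C0 s] exits_step.prems(1) by simp
  moreover have "lands_in C ?b" using exits_step.hyps(1) by (auto simp: lands_in_iff)
  ultimately have "exec \<phi> C s = prepend ?b (exec \<phi> C (target ?b))"
    using exec_exits_prefix exits_step.prems(2) by blast
  then show ?case using exits_step.IH exits_step.prems by simp
qed

lemma reaches_of_reaches_nested: "reaches \<psi> (C - C0) s y \<Longrightarrow> \<psi> = exec \<phi> C0 \<Longrightarrow> C0 \<subseteq> C \<Longrightarrow> reaches \<phi> C s y"
proof (induction rule: reaches.induct)
  case (reaches_edge x)
  have ib: "has_target (\<psi> x)" using reaches_edge.hyps lands_in_has_target by blast
  then have f: "exits \<phi> C0 x (\<psi> x)" using exits_exec[of \<phi> C0 x] reaches_edge.prems(1) by simp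
  have "lands_in C (\<psi> x)" using reaches_edge.hyps by (auto simp: lands_in_iff)
  from exits_reaches[OF f reaches_edge.prems(2) this] show ?case .
next
  case (reaches_step x y)
  have ib: "has_target (\<psi> y)" using reaches_step.hyps lands_in_has_target by blast
  then have f: "exits \<phi> C0 y (\<psi> y)" using exits_exec[of \<phi> C0 y] reaches_step.prems(1) by simp
  have "lands_in C (\<psi> y)" using reaches_step.hyps by (auto simp: lands_in_iff)
  from exits_reaches[OF f reaches_step.prems(2) this] have "reaches \<phi> C y (target (\<psi> y))" .
  then show ?case using reaches_trans reaches_step by blast
qed

theorem exec_nested:
  assumes fin: "finite C" and sub: "C0 \<subseteq> C"
  shows "exec (exec \<phi> C0) (C - C0) s = exec \<phi> C s"
proof (cases "\<exists>e. exits (exec \<phi> C0) (C - C0) s e")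
  case True
  then obtain e where e: "exits (exec \<phi> C0) (C - C0) s e" by blast
  then show ?thesis using exec_eq_if_exits_nested[OF e refl sub fin] exec_eqI[OF e] by simp
next
  case False
  let ?\<psi> = "exec \<phi> C0"
  have nf: "\<not> (\<exists>e. exits \<phi> C s e)" using False exits_nested sub by blast
  have "finite (C - C0)" using fin by simp
  then obtain y w where yw: "reaches ?\<psi> (C - C0) s y" "on_cycle ?\<psi> (C - C0) y w"
    using exits_or_cycle[of "C - C0" ?\<psi> s] False by blast
  have yC: "y \<in> C - C0" using reaches_in[OF yw(1)] .
  have r: "reaches \<phi> C s y" using reaches_of_reaches_nested[OF yw(1) refl sub] .
  have "\<exists>e. exits ?\<psi> ((C - C0) - {y}) y e \<and> (e = Wt w y \<or> (e = Nd y \<and> w = 0))"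
    using yw(2) unfolding on_cycle_def by (elim disjE) auto
  then obtain e where e: "exits ?\<psi> ((C - {y}) - C0) y e" "e = Wt w y \<or> (e = Nd y \<and> w = 0)"
    by (metis Diff_insert Diff_insert2)
  have sub2: "C0 \<subseteq> C - {y}" using sub yC by blast
  have "exec \<phi> (C - {y}) y = e" using exec_eq_if_exits_nested[OF e(1) refl sub2] fin by simp
  moreover have "has_target e" using e(2) by auto
  ultimately have "exits \<phi> (C - {y}) y e" using exits_exec by metis
  then have c: "on_cycle \<phi> C y w" using e(2) unfolding on_cycle_def by auto
  show ?thesis
    using exec_diverging[OF False] exec_diverging[OF nf] cycle_verdict_eq[OF yw] cycle_verdict_eq[OF r c]
    by simp
qed

section \<open>Relabelling and post-composition\<close>

text \<open>The renamed run is entered through an extra edge \<open>a\<close> whose weight is prepended;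
  \<open>a = Nd 0\<close> enters without weight.\<close>

lemma exits_relabel:
  assumes inj: "inj \<rho>" and h: "\<forall>x\<in>D'. \<phi> (\<rho> x) = relabel \<rho> (\<phi>' x)"
  shows "exits \<phi>' D' x e \<Longrightarrow> \<phi> z = prepend a (relabel \<rho> (\<phi>' x)) \<Longrightarrow> has_target a \<Longrightarrow> exits \<phi> (\<rho> ` D') z (prepend a (relabel \<rho> e))"
proof (induction arbitrary: z a rule: exits.induct)
  case (exits_stop x)
  have "\<not> lands_in (\<rho> ` D') (\<phi> z)" using exits_stop lands_in_relabel[OF inj] by simp
  then show ?case using exits.exits_stop[of "\<rho> ` D'" \<phi> z] exits_stop by simp
next
  case (exits_step x e)
  let ?b = "\<phi>' x" and ?k = "target (\<phi>' x)"
  have ib: "has_target ?b" using exits_step.hyps(1) lands_in_has_target by blast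
  have kD: "?k \<in> D'" using exits_step.hyps(1) by (simp add: lands_in_iff)
  have "\<phi> (\<rho> ?k) = prepend (Nd 0) (relabel \<rho> (\<phi>' ?k))" using h kD by simp
  then have IH: "exits \<phi> (\<rho> ` D') (\<rho> ?k) (relabel \<rho> e)"
    using exits_step.IH[where z="\<rho> ?k" and a="Nd 0"] by simp
  have t: "lands_in (\<rho> ` D') (\<phi> z)"
    using exits_step.prems(1) exits_step.hyps(1) lands_in_relabel[OF inj] by simp
  have n: "target (\<phi> z) = \<rho> ?k" using exits_step.prems(1) target_relabel[OF ib] by simp
  have "exits \<phi> (\<rho> ` D') z (prepend (\<phi> z) (relabel \<rho> e))"
    using exits.exits_step[of "\<rho> ` D'" \<phi> z, OF t] IH n by simp
  moreover have "prepend (\<phi> z) (relabel \<rho> e) = prepend a (relabel \<rho> (prepend ?b e))"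
    using exits_step.prems(1) prepend_assoc[of "relabel \<rho> ?b" a "relabel \<rho> e"] ib relabel_prepend_relabel[OF ib]
      by simp
  ultimately show ?case by simp
qed

lemma exits_relabel_conv:
  assumes inj: "inj \<rho>" and h: "\<forall>x\<in>D'. \<phi> (\<rho> x) = relabel \<rho> (\<phi>' x)"
  shows "exits \<phi> (\<rho> ` D') z e \<Longrightarrow> \<phi> z = prepend a (relabel \<rho> (\<phi>' x)) \<Longrightarrow> has_target a \<Longrightarrow> \<exists>e'. exits \<phi>' D' x e'"
proof (induction arbitrary: x a rule: exits.induct)
  case (exits_stop z)
  then have "\<not> lands_in D' (\<phi>' x)" using lands_in_relabel[OF inj] by simp
  then show ?case using exits.exits_stop by blast
next
  case (exits_step z e)
  then have t: "lands_in D' (\<phi>' x)" using lands_in_relabel[OF inj] by simp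
  have ib: "has_target (\<phi>' x)" using t lands_in_has_target by blast
  let ?k = "target (\<phi>' x)"
  have kD: "?k \<in> D'" using t by (simp add: lands_in_iff)
  have n: "target (\<phi> z) = \<rho> ?k" using exits_step.prems(1) target_relabel[OF ib] by simp
  have "\<phi> (\<rho> ?k) = prepend (Nd 0) (relabel \<rho> (\<phi>' ?k))" using h kD by simp
  then obtain e' where "exits \<phi>' D' ?k e'" using exits_step.IH[where x="?k" and a="Nd 0"] n by auto
  then show ?case using exits.exits_step[of D' \<phi>' x, OF t] by blast
qed

lemma reaches_relabel:
  assumes inj: "inj \<rho>" and h: "\<forall>x\<in>C'. \<phi> (\<rho> x) = relabel \<rho> (\<phi>' x)"
  shows "reaches \<phi>' C' x y \<Longrightarrow> \<phi> z = prepend a (relabel \<rho> (\<phi>' x)) \<Longrightarrow> reaches \<phi> (\<rho> ` C') z (\<rho> y)"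
proof (induction rule: reaches.induct)
  case (reaches_edge x)
  have ib: "has_target (\<phi>' x)" using reaches_edge.hyps lands_in_has_target by blast
  have t: "lands_in (\<rho> ` C') (\<phi> z)" using reaches_edge lands_in_relabel[OF inj] by simp
  have "target (\<phi> z) = \<rho> (target (\<phi>' x))" using reaches_edge.prems target_relabel[OF ib] by simp
  then show ?case using reaches.reaches_edge[of "\<rho> ` C'" \<phi> z, OF t] by simp
next
  case (reaches_step x y)
  have yC: "y \<in> C'" using reaches_in[OF reaches_step.hyps(1)] .
  have ib: "has_target (\<phi>' y)" using reaches_step.hyps lands_in_has_target by blast
  have e: "\<phi> (\<rho> y) = relabel \<rho> (\<phi>' y)" using h yC by simp
  have t: "lands_in (\<rho> ` C') (\<phi> (\<rho> y))"
    using e reaches_step.hyps(2) lands_in_relabel[OF inj] by simp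
  have "target (\<phi> (\<rho> y)) = \<rho> (target (\<phi>' y))" using e target_relabel[OF ib] by simp
  then show ?case using reaches.reaches_step[OF reaches_step.IH[OF reaches_step.prems] t] by simp
qed

lemma on_cycle_relabel:
  assumes inj: "inj \<rho>" and h: "\<forall>x\<in>C'. \<phi> (\<rho> x) = relabel \<rho> (\<phi>' x)"
    and c: "on_cycle \<phi>' C' y w" and yC: "y \<in> C'"
  shows "on_cycle \<phi> (\<rho> ` C') (\<rho> y) w"
proof -
  have h': "\<forall>x\<in>C' - {y}. \<phi> (\<rho> x) = relabel \<rho> (\<phi>' x)" using h by blast
  have e: "\<phi> (\<rho> y) = prepend (Nd 0) (relabel \<rho> (\<phi>' y))" using h yC by simp
  have im: "\<rho> ` (C' - {y}) = \<rho> ` C' - {\<rho> y}" using inj by (simp add: image_set_diff)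
  have "\<exists>e. exits \<phi>' (C' - {y}) y e \<and> (e = Wt w y \<or> (e = Nd y \<and> w = 0))"
    using c unfolding on_cycle_def by (elim disjE) auto
  then obtain e where e1: "exits \<phi>' (C' - {y}) y e" "e = Wt w y \<or> (e = Nd y \<and> w = 0)" by blast
  have "exits \<phi> (\<rho> ` (C' - {y})) (\<rho> y) (prepend (Nd 0) (relabel \<rho> e))"
    using exits_relabel[OF inj h' e1(1) e] by simp
  then have "exits \<phi> (\<rho> ` C' - {\<rho> y}) (\<rho> y) (relabel \<rho> e)" using im by simp
  then show ?thesis using e1(2) unfolding on_cycle_def by auto
qed

lemma exec_relabel:
  assumes inj: "inj \<rho>" and h: "\<forall>x\<in>C'. \<phi> (\<rho> x) = relabel \<rho> (\<phi>' x)" and fin: "finite C'"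
    and s: "\<phi> s = prepend a (relabel \<rho> (\<phi>' s'))" and a: "has_target a"
  shows "exec \<phi> (\<rho> ` C') s = prepend a (relabel \<rho> (exec \<phi>' C' s'))"
proof (cases "\<exists>e. exits \<phi>' C' s' e")
  case True
  then obtain e where e: "exits \<phi>' C' s' e" by blast
  show ?thesis using exits_relabel[OF inj h e s a] exec_eqI e by metis
next
  case False
  have nf: "\<not> (\<exists>e. exits \<phi> (\<rho> ` C') s e)" using exits_relabel_conv[OF inj h _ s a] False by blast
  obtain y w where yw: "reaches \<phi>' C' s' y" "on_cycle \<phi>' C' y w"
    using exits_or_cycle[OF fin, of \<phi>' s'] False by blast
  have r: "reaches \<phi> (\<rho> ` C') s (\<rho> y)" using reaches_relabel[OF inj h yw(1) s] .
  have c: "on_cycle \<phi> (\<rho> ` C') (\<rho> y) w"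
    using on_cycle_relabel[OF inj h yw(2) reaches_in[OF yw(1)]] .
  show ?thesis
    using exec_diverging[OF False] exec_diverging[OF nf] cycle_verdict_eq[OF yw] cycle_verdict_eq[OF r c]
    by simp
qed

lemma exec_cong_prepend:
  assumes "\<forall>x\<in>C. \<phi> x = \<phi>' x" "finite C" "\<phi> s = prepend a (\<phi>' s')" "has_target a"
  shows "exec \<phi> C s = prepend a (exec \<phi>' C s')"
  using exec_relabel[of "\<lambda>j. j" C \<phi> \<phi>' s a s'] assms by (simp add: inj_on_def)

lemma exec_cong: "\<forall>x\<in>C. \<phi> x = \<phi>' x \<Longrightarrow> finite C \<Longrightarrow> \<phi> s = \<phi>' s \<Longrightarrow> exec \<phi> C s = exec \<phi>' C s"
  using exec_cong_prepend[of C \<phi> \<phi>' s "Nd 0" s] by simp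

context
  fixes f H :: "nat \<Rightarrow> tval" and C X :: "nat set"
  assumes H_fixes: "\<forall>y\<in>C. H y = Nd y"
    and H_exits: "\<forall>x\<in>X. has_target (f x) \<longrightarrow> target (f x) \<notin> C \<longrightarrow> \<not> lands_in C (H (target (f x)))"
    and C_X: "C \<subseteq> X"
begin

lemma postcomp_eq_self: "lands_in C (f x) \<Longrightarrow> postcomp H (f x) = f x"
   using H_fixes by (intro postcomp_fixed) (auto simp: lands_in_iff)

lemma lands_in_before_postcomp: "x \<in> X \<Longrightarrow> lands_in D (postcomp H (f x)) \<Longrightarrow> D \<subseteq> C \<Longrightarrow> lands_in C (f x)"
proof (rule ccontr)
  assume a: "x \<in> X" "lands_in D (postcomp H (f x))" "D \<subseteq> C" "\<not> lands_in C (f x)"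
  show False
  proof (cases "has_target (f x)")
    case True
    then have "target (f x) \<notin> C" using a(4) by (simp add: lands_in_iff)
    then have "\<not> lands_in C (H (target (f x)))" using H_exits a(1) True by blast
    then have "\<not> lands_in C (postcomp H (f x))" unfolding postcomp_def using True by simp
    then show False using a(2,3) by (auto simp: lands_in_iff)
  next
    case False
    then show False using a(2) unfolding postcomp_def by (simp add: lands_in_iff)
  qed
qed

lemma exits_postcomp: "exits f D x e \<Longrightarrow> D \<subseteq> C \<Longrightarrow> x \<in> X \<Longrightarrow> exits (\<lambda>z. postcomp H (f z)) D x (postcomp H e)"
proof (induction rule: exits.induct)
  case (exits_stop x)
  have "\<not> lands_in D (postcomp H (f x))"
  proof
    assume "lands_in D (postcomp H (f x))"
    then have "lands_in C (f x)" using lands_in_before_postcomp exits_stop by blast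
    then have "postcomp H (f x) = f x" by (rule postcomp_eq_self)
    then show False using exits_stop \<open>lands_in D (postcomp H (f x))\<close> by simp
  qed
  then show ?case using exits.exits_stop[of D "\<lambda>z. postcomp H (f z)" x] by simp
next
  case (exits_step x e)
  have t: "lands_in C (f x)" using exits_step by (auto simp: lands_in_iff)
  then have P: "postcomp H (f x) = f x" by (rule postcomp_eq_self)
  have "target (f x) \<in> X"
    using exits_step.hyps(1) exits_step.prems(1) C_X by (auto simp: lands_in_iff)
  then have "exits (\<lambda>z. postcomp H (f z)) D (target (f x)) (postcomp H e)" using exits_step by simp
  then have "exits (\<lambda>z. postcomp H (f z)) D x (prepend (f x) (postcomp H e))"
    using exits.exits_step[of D "\<lambda>z. postcomp H (f z)" x] P exits_step.hyps(1) by simp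
  then show ?case
    using postcomp_prepend[of "f x" H e] exits_step.hyps(1) lands_in_has_target by auto
qed

lemma exits_postcomp_conv: "exits (\<lambda>z. postcomp H (f z)) D x e \<Longrightarrow> D \<subseteq> C \<Longrightarrow> x \<in> X \<Longrightarrow> \<exists>e'. exits f D x e'"
proof (induction rule: exits.induct)
  case (exits_stop x)
  have "\<not> lands_in D (f x)"
  proof
    assume a: "lands_in D (f x)"
    then have "lands_in C (f x)" using exits_stop by (auto simp: lands_in_iff)
    then have "postcomp H (f x) = f x" by (rule postcomp_eq_self)
    then show False using exits_stop a by simp
  qed
  then show ?case using exits.exits_stop by blast
next
  case (exits_step x e)
  have "lands_in C (f x)" using lands_in_before_postcomp exits_step by blast
  then have P: "postcomp H (f x) = f x" by (rule postcomp_eq_self)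
  have "target (f x) \<in> X"
    using exits_step.hyps(1) exits_step.prems(1) C_X P by (auto simp: lands_in_iff)
  then obtain e' where "exits f D (target (f x)) e'" using exits_step P by auto
  then show ?case using exits.exits_step[of D f x] exits_step.hyps(1) P by auto
qed

lemma reaches_postcomp: "reaches f C x y \<Longrightarrow> reaches (\<lambda>z. postcomp H (f z)) C x y"
proof (induction rule: reaches.induct)
  case (reaches_edge x)
  then show ?case using reaches.reaches_edge[of C "\<lambda>z. postcomp H (f z)" x] postcomp_eq_self by simp
next
  case (reaches_step x y)
  then show ?case
    using reaches.reaches_step[of "\<lambda>z. postcomp H (f z)" C x y] postcomp_eq_self by simp
qed

lemma on_cycle_postcomp: "on_cycle f C y w \<Longrightarrow> y \<in> C \<Longrightarrow> on_cycle (\<lambda>z. postcomp H (f z)) C y w"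
proof -
  assume c: "on_cycle f C y w" and yC: "y \<in> C"
  have "\<exists>e. exits f (C - {y}) y e \<and> (e = Wt w y \<or> (e = Nd y \<and> w = 0))"
    using c unfolding on_cycle_def by (elim disjE) auto
  then obtain e where e1: "exits f (C - {y}) y e" "e = Wt w y \<or> (e = Nd y \<and> w = 0)" by blast
  have "exits (\<lambda>z. postcomp H (f z)) (C - {y}) y (postcomp H e)"
    using exits_postcomp[OF e1(1)] yC C_X by auto
  moreover have "postcomp H e = e" using e1(2) H_fixes yC by (auto intro: postcomp_fixed)
  ultimately show ?thesis using e1(2) unfolding on_cycle_def by auto
qed

lemma exec_postcomp: "finite C \<Longrightarrow> s \<in> X \<Longrightarrow> exec (\<lambda>z. postcomp H (f z)) C s = postcomp H (exec f C s)"
proof -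
  assume fin: "finite C" and sX: "s \<in> X"
  show ?thesis
  proof (cases "\<exists>e. exits f C s e")
    case True
    then obtain e where e: "exits f C s e" by blast
    then show ?thesis using exits_postcomp[OF e _ sX] exec_eqI by (metis order_refl)
  next
    case False
    have nf: "\<not> (\<exists>e. exits (\<lambda>z. postcomp H (f z)) C s e)"
      using exits_postcomp_conv[OF _ _ sX] False by blast
    obtain y w where yw: "reaches f C s y" "on_cycle f C y w"
      using exits_or_cycle[OF fin, of f s] False by blast
    have r: "reaches (\<lambda>z. postcomp H (f z)) C s y" using reaches_postcomp[OF yw(1)] .
    have c: "on_cycle (\<lambda>z. postcomp H (f z)) C y w"
      using on_cycle_postcomp[OF yw(2) reaches_in[OF yw(1)]] .
    have "cycle_verdict f C s = EStar \<or> cycle_verdict f C s = AStar" by (rule cycle_verdict_cases)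
    then show ?thesis
      using exec_diverging[OF False] exec_diverging[OF nf] cycle_verdict_eq[OF yw] cycle_verdict_eq[OF r c]
      by auto
  qed
qed

end

lemma exits_in_T: "exits \<phi> D x e \<Longrightarrow> (\<forall>z\<in>D \<union> {x}. in_T N (\<phi> z)) \<Longrightarrow> in_T N e"
proof (induction rule: exits.induct)
  case (exits_stop x)
  then show ?case by simp
next
  case (exits_step x e)
  have "target (\<phi> x) \<in> D" using exits_step.hyps(1) by (simp add: lands_in_iff)
  then have "in_T N e" using exits_step by simp
  then show ?case by (cases "\<phi> x"; cases e) (auto simp: in_T_def)
qed

lemma exec_in_T: "\<forall>z\<in>C \<union> {s}. in_T N (\<phi> z) \<Longrightarrow> in_T N (exec \<phi> C s)"
proof (cases "\<exists>e. exits \<phi> C s e")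
  case True
  then obtain e where "exits \<phi> C s e" by blast
  moreover assume "\<forall>z\<in>C \<union> {s}. in_T N (\<phi> z)"
  ultimately show ?thesis using exits_in_T exec_eqI by metis
next
  case False
  then show ?thesis using exec_diverging cycle_verdict_cases[of \<phi> C s] by (auto simp: in_T_def)
qed

definition realizable :: "(nat \<Rightarrow> tval) \<Rightarrow> nat set \<Rightarrow> bool" where
  "realizable \<phi> D \<longleftrightarrow>
     (\<forall>a\<in>D. \<forall>k. \<phi> a = Nd k \<longrightarrow> (\<forall>b\<in>D - {a}. \<not> (has_target (\<phi> b) \<and> target (\<phi> b) = k)))"

lemma realizableD: "realizable \<phi> D \<Longrightarrow> a \<in> D \<Longrightarrow> b \<in> D \<Longrightarrow> \<phi> a = Nd k \<Longrightarrow> has_target (\<phi> b) \<Longrightarrow> target (\<phi> b) = k \<Longrightarrow> a = b"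
  unfolding realizable_def by blast

lemma realizable_exits_same_target:
  assumes R: "realizable \<phi> D" and CD: "C \<subseteq> D"
    and x': "exits \<phi> C x' e'" "x' \<in> D" "has_target e'" "target e' = p"
  shows "exits \<phi> C x e \<Longrightarrow> e = Nd p \<Longrightarrow> x \<in> D \<Longrightarrow> x' = x \<or> reaches \<phi> C x' x \<or> reaches \<phi> C x x'"
proof (induction rule: exits.induct)
  case (exits_stop x)
  then have fx: "\<phi> x = Nd p" and xD: "x \<in> D" and "p \<notin> C" by auto
  from x' this(3) show ?case
  proof (induction rule: exits.induct)
    case (exits_stop x')
    then show ?case using realizableD[OF R xD _ fx] by auto
  next
    case (exits_step x' e)
    let ?k = "target (\<phi> x')"
    have "?k \<in> D" using exits_step.hyps(1) CD by (auto simp: lands_in_iff)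
    then have "?k = x \<or> reaches \<phi> C ?k x \<or> reaches \<phi> C x ?k" using exits_step by simp
    moreover have "\<not> reaches \<phi> C x ?k" using reaches_lands_in fx \<open>p \<notin> C\<close> by fastforce
    moreover have "reaches \<phi> C x' ?k" using reaches_edge[of C \<phi> x', OF exits_step.hyps(1)] .
    ultimately show ?case using reaches_trans by blast
  qed
next
  case (exits_step x e)
  obtain k where k: "\<phi> x = Nd k" and "e = Nd p"
    using prepend_eq_Nd[OF exits_step.prems(1) lands_in_has_target[OF exits_step.hyps(1)]] by blast
  moreover have kC: "k \<in> C" using exits_step.hyps(1) k by simp
  ultimately have "x' = k \<or> reaches \<phi> C x' k \<or> reaches \<phi> C k x'" using exits_step.IH CD by auto
  moreover have xk: "reaches \<phi> C x k" using reaches_edge[of C \<phi> x, OF exits_step.hyps(1)] k by simp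
  moreover have "x' = x \<or> reaches \<phi> C x' x" if "reaches \<phi> C x' k"
    using that
  proof cases
    case reaches_edge
    then show ?thesis
      using realizableD[OF R exits_step.prems(2) x'(2) k] lands_in_has_target by blast
  next
    case (reaches_step y)
    then have "y \<in> D" using reaches_in CD by blast
    then show ?thesis
      using reaches_step realizableD[OF R exits_step.prems(2) _ k] lands_in_has_target by blast
  qed
  ultimately show ?case using reaches_trans by blast
qed

lemma realizable_exec_unique:
  assumes R: "realizable \<phi> D" and CD: "C \<subseteq> D" and s: "s1 \<in> D - C" "s2 \<in> D - C"
    and "exec \<phi> C s1 = Nd p" "has_target (exec \<phi> C s2)" "target (exec \<phi> C s2) = p"
  shows "s1 = s2"
proof -
  have "exits \<phi> C s1 (Nd p)" "exits \<phi> C s2 (exec \<phi> C s2)"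
    using assms(5-7) exits_exec[of \<phi> C s1] exits_exec[of \<phi> C s2] by auto
  then have "s2 = s1 \<or> reaches \<phi> C s2 s1 \<or> reaches \<phi> C s1 s2"
    using realizable_exits_same_target[OF R CD] s assms(6,7) by blast
  then show ?thesis using reaches_in s by blast
qed

lemma arr_in_T: "arr m n f \<Longrightarrow> i \<in> {1..m} \<Longrightarrow> in_T n (f i)"
  unfolding arr_def by blast

lemma arr_iff: "arr m n f \<longleftrightarrow> (\<forall>i\<in>{1..m}. in_T n (f i)) \<and> realizable f {1..m}"
proof -
  have "(x \<noteq> Nd k \<and> (\<forall>r. x \<noteq> Wt r k)) = (\<not> (has_target x \<and> target x = k))" for x k
    by (cases x) auto
  then show ?thesis unfolding arr_def realizable_def by simp
qed

lemma arr_realizable: "arr m n f \<Longrightarrow> realizable f {1..m}"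
  by (simp add: arr_iff)

lemma arrI:
  assumes "\<And>i. i \<in> {1..m} \<Longrightarrow> in_T n (f i)"
    and "\<And>a b k. a \<in> {1..m} \<Longrightarrow> b \<in> {1..m} \<Longrightarrow> f a = Nd k \<Longrightarrow> has_target (f b) \<Longrightarrow> target (f b) = k \<Longrightarrow> a = b"
  shows "arr m n f"
  unfolding arr_iff realizable_def using assms by blast

section \<open>The trace as an execution\<close>

lemma tseq_eq_walk: "\<forall>t\<in>{1..<j}. tcont l (tseq f l i t) \<Longrightarrow> tseq f l i j = walk f (l + i) j"
proof (induction j)
  case (Suc j)
  have "j = 0 \<or> tcont l (tseq f l i j)"
  proof (cases "j = 0")
    case False
    then have "j \<in> {1..<Suc j}" by simp
    then show ?thesis using Suc.prems by blast
  qed simp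
  then show ?case using Suc by (auto simp: walk.simps(2))
qed simp

lemma wt_in_eq_weight: "in_T N x \<Longrightarrow> wt_in N x = weight x"
  by (cases x) (auto simp: in_T_def wt_in_def)

text \<open>A walk that never leaves the internal nodes of a realizable wiring cannot run
  through a cycle of plain edges: going backwards along such a cycle, realizability
  forces the walk to have been on the cycle from the start, i.e. at an internal node.\<close>

lemma realizable_periodic_walk_weighted:
  assumes R: "realizable \<phi> D" and CD: "C \<subseteq> D" and s: "s \<in> D" "s \<notin> C"
    and inC: "\<forall>t\<ge>1. lands_in C (walk \<phi> s t)"
    and per: "\<forall>t\<ge>a. walk \<phi> s (t + p) = walk \<phi> s t" and p: "0 < p"
  shows "\<exists>j\<in>{a..<a+p}. is_weighted (walk \<phi> s j)"
proof (rule ccontr)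
  assume "\<not> ?thesis"
  then have unweighted: "\<not> is_weighted (walk \<phi> s t)" if "a \<le> t" for t
    using eventually_periodic_reduce[OF per p that] by fastforce
  define q where "q = Suc a * p"
  have q: "a \<le> q" "1 \<le> q" using p by (cases p; simp add: q_def)+
  have per_q: "walk \<phi> s (t + q) = walk \<phi> s t" if "a \<le> t" for t
    unfolding q_def using eventually_periodic_add_mult[OF per that] .
  define x where "x t = target (walk \<phi> s t)" for t
  have has_t: "has_target (walk \<phi> s t)" for t
    using inC lands_in_has_target by (cases t) auto
  have walk_Suc: "walk \<phi> s (Suc t) = \<phi> (x t)" for t
    unfolding x_def by (rule walk_Suc_has_target[OF has_t])
  have xC: "x t \<in> C" if "1 \<le> t" for t using inC that by (auto simp: x_def lands_in_iff)
  have xD: "x t \<in> D" for t using s xC CD by (cases t) (auto simp: x_def)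
  have "x t = x (t + q)" if "t \<le> a" for t
    using that
  proof (induction t rule: inc_induct)
    case base
    then show ?case using per_q[of a] by (simp add: x_def)
  next
    case (step t)
    have "a \<le> Suc (t + q)" using q by simp
    then have "\<not> is_weighted (\<phi> (x (t + q)))" using unweighted walk_Suc by metis
    then have "\<phi> (x (t + q)) = Nd (x (Suc t))"
      using has_t[of "Suc (t + q)"] walk_Suc[of "t + q"] step.IH
      by (cases "\<phi> (x (t + q))") (auto simp: x_def)
    moreover have "has_target (\<phi> (x t))" "target (\<phi> (x t)) = x (Suc t)"
      using has_t[of "Suc t"] walk_Suc[of t] by (simp_all add: x_def)
    ultimately show ?case using realizableD[OF R xD xD] by metis
  qed
  from this[of 0] have "s = x q" by (simp add: x_def)
  then show False using xC[OF q(2)] s(2) by simp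
qed

context
  fixes l m n :: nat and f :: "nat \<Rightarrow> tval" and i :: nat
  assumes f: "arr (l + m) (l + n) f" and i: "i \<in> {1..m}"
begin

lemma walk_in_T:
  assumes "\<forall>t\<in>{1..<j}. lands_in {1..l} (walk f (l + i) t)" "1 \<le> j"
  shows "in_T (l + n) (walk f (l + i) j)"
proof -
  obtain j' where j': "j = Suc j'" using assms(2) by (cases j) auto
  have "has_target (walk f (l + i) j') \<and> target (walk f (l + i) j') \<in> {1..l+m}"
  proof (cases j')
    case (Suc j'')
    then have "lands_in {1..l} (walk f (l + i) j')" using assms(1) j' by auto
    then show ?thesis by (auto simp: lands_in_iff)
  qed (use i in simp)
  then show ?thesis using j' walk_Suc_has_target arr_in_T[OF f] by metis
qed

lemma trace_exiting:
  assumes exit: "\<exists>K\<ge>1. \<not> tcont l (tseq f l i K)"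
  shows "trace l n f i = relabel (\<lambda>p. p - l) (exec f {1..l} (l + i))"
proof -
  let ?v = "tseq f l i" and ?u = "walk f (l + i)"
  define K where "K = (LEAST K. K \<ge> 1 \<and> \<not> tcont l (?v K))"
  have K: "K \<ge> 1" "\<not> tcont l (?v K)" unfolding K_def using LeastI_ex[OF exit] by blast+
  have before_K: "tcont l (?v t)" if "1 \<le> t" "t < K" for t
    using not_less_Least[of t "\<lambda>K. K \<ge> 1 \<and> \<not> tcont l (?v K)"] that unfolding K_def by blast
  have vu: "?v t = ?u t" if "t \<le> K" for t
    using that before_K by (intro tseq_eq_walk) auto
  have uC: "\<forall>t\<in>{1..<K}. lands_in {1..l} (?u t)" using before_K vu by (auto simp: tcont_eq_lands_in)
  have "\<not> lands_in {1..l} (?u K)" using K vu by (simp add: tcont_eq_lands_in)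
  then have W: "exec f {1..l} (l + i) = walk_result ?u K"
    using walk_exits[of K "{1..l}" f "l + i"] K(1) uC exec_eqI by simp
  have "in_T (l + n) (?u t)" if "t \<in> {1..K}" for t
    using walk_in_T[of t] uC that by auto
  then have S: "(\<Sum>j\<in>{1..K}. wt_in (l + n) (?v j)) = (\<Sum>j\<in>{1..K}. weight (?u j))"
    using vu wt_in_eq_weight by (intro sum.cong) auto
  have "(\<exists>r k. ?v j = Wt r k \<and> 1 \<le> k \<and> k \<le> l) = is_weighted (?u j)" if "j \<in> {1..<K}" for j
  proof -
    have "lands_in {1..l} (?u j)" using uC that by blast
    then show ?thesis using that vu[of j] by (cases "?u j") (auto simp: is_weighted_def)
  qed
  then have B: "(\<exists>j\<in>{1..<K}. \<exists>r k. ?v j = Wt r k \<and> 1 \<le> k \<and> k \<le> l) = (\<exists>j\<in>{1..<K}. is_weighted (?u j))"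
    by blast
  have B': "(\<exists>j\<in>{1..K}. is_weighted (?u j)) = ((\<exists>j\<in>{1..<K}. is_weighted (?u j)) \<or> is_weighted (?u K))"
    using K(1) by (auto simp: le_less)
  have "trace l n f i = (case ?v K of
          EStar \<Rightarrow> EStar
        | AStar \<Rightarrow> AStar
        | Nd p \<Rightarrow> (if (\<exists>j\<in>{1..<K}. \<exists>r k. ?v j = Wt r k \<and> 1 \<le> k \<and> k \<le> l)
                   then Wt (\<Sum>j\<in>{1..K}. wt_in (l + n) (?v j)) (p - l) else Nd (p - l))
        | Wt r p \<Rightarrow> Wt (\<Sum>j\<in>{1..K}. wt_in (l + n) (?v j)) (p - l))"
    unfolding trace_def Let_def K_def using exit by simp
  then show ?thesis
    unfolding W S B walk_result_def B' using vu[of K] by (cases "?u K") auto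
qed

lemma trace_cycling:
  assumes no_exit: "\<not> (\<exists>K\<ge>1. \<not> tcont l (tseq f l i K))"
  shows "trace l n f i = relabel (\<lambda>p. p - l) (exec f {1..l} (l + i))"
proof -
  let ?v = "tseq f l i" and ?u = "walk f (l + i)"
  have uC: "\<forall>t\<ge>1. lands_in {1..l} (?u t)" and vu: "\<And>t. ?v t = ?u t"
    using no_exit tseq_eq_walk[where f=f and l=l and i=i] by (auto simp: tcont_eq_lands_in)
  have "\<nexists>e. exits f {1..l} (l + i) e"
    using exits_walk uC by fastforce
  moreover obtain y w where yw: "reaches f {1..l} (l + i) y" "on_cycle f {1..l} y w"
    using exits_or_cycle[of "{1..l}" f "l + i"] calculation by auto
  ultimately have W: "exec f {1..l} (l + i) = (if 0 \<le> w then EStar else AStar)"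
    using exec_diverging cycle_verdict_eq by metis
  obtain a p where ap: "0 < p" "\<forall>t\<ge>a. ?u (t + p) = ?u t" "(\<Sum>t\<in>{a..<a+p}. weight (?u t)) = w"
    using on_cycle_periodic_walk[OF yw] by blast
  define J where "J = {j. \<exists>r k. ?v j = Wt r k \<and> 1 \<le> k \<and> k \<le> l}"
  have "(\<exists>r k. ?v j = Wt r k \<and> 1 \<le> k \<and> k \<le> l) = is_weighted (?u j)" for j
    using uC[rule_format, of j] vu[of j] by (cases j; cases "?u j") (auto simp: is_weighted_def)
  then have J: "J = {j. is_weighted (?u j)}" unfolding J_def by blast
  have weights: "wt_in l (?v j) = weight (?u j)" for j
    using uC[rule_format, of j] vu[of j] by (cases j; cases "?u j") (auto simp: wt_in_def)
  have window: "\<exists>j\<in>{a..<a+p}. j \<in> J"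
    using realizable_periodic_walk_weighted[OF arr_realizable[OF f] _ _ _ uC ap(2,1)] i J by auto
  have "(\<lambda>N. (\<Sum>t<Suc N. weight (?u (enumerate J t))) / real (Suc N)) \<longlonglongrightarrow> w / card (J \<inter> {a..<a+p})"
    using cesaro_enumerate_eventually_periodic[of a "\<lambda>t. weight (?u t)" p J] ap window J
    by (auto simp: weight_unweighted)
  then have "liminf (\<lambda>N. ereal ((\<Sum>t<Suc N. wt_in l (?v (enumerate J t))) / real (Suc N)))
      = ereal (w / card (J \<inter> {a..<a+p}))"
    unfolding weights by (intro lim_imp_Liminf) (simp_all add: tendsto_ereal)
  moreover have "(0 \<le> w / card (J \<inter> {a..<a+p})) = (0 \<le> w)"
    using window by (auto simp: zero_le_divide_iff card_gt_0_iff)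
  moreover have "trace l n f i = (if liminf (\<lambda>N. ereal ((\<Sum>t<Suc N. wt_in l (?v (enumerate J t))) / real (Suc N))) \<ge> 0 then EStar else AStar)"
    unfolding trace_def Let_def J_def by (simp only: if_not_P[OF no_exit])
  ultimately show ?thesis using W by simp
qed

end

theorem trace_eq_exec:
  "arr (l + m) (l + n) f \<Longrightarrow> i \<in> {1..m} \<Longrightarrow> trace l n f i = relabel (\<lambda>p. p - l) (exec f {1..l} (l + i))"
  using trace_exiting trace_cycling by blast

section \<open>The symmetric monoidal category\<close>

lemma osum_eq: "osum m n f g i = (if i \<le> m then f i else relabel ((+) n) (g (i - m)))"
  by (simp add: osum_def shiftT_eq_relabel)

lemma arr_idA: "arr m m idA"
  unfolding arr_def idA_def in_T_def by auto

lemma arr_comp: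
  assumes f: "arr m l f" and g: "arr l n g"
  shows "arr m n (comp f g)"
proof (rule arrI)
  fix i assume "i \<in> {1..m}"
  then show "in_T n (comp f g i)"
    unfolding comp_eq_postcomp using in_T_postcomp arr_in_T[OF f] arr_in_T[OF g] by blast
next
  fix a b k assume a: "a \<in> {1..m}" and b: "b \<in> {1..m}" and "comp f g a = Nd k"
    and "has_target (comp f g b)" "target (comp f g b) = k"
  then obtain j where j: "f a = Nd j" "g j = Nd k"
    and fb: "has_target (f b)" "has_target (g (target (f b)))" "target (g (target (f b))) = k"
    using postcomp_eq_Nd has_target_postcomp by (metis comp_eq_postcomp)
  have "j \<in> {1..l}" "target (f b) \<in> {1..l}"
    using arr_in_T[OF f a] arr_in_T[OF f b] j fb(1) by (simp_all add: in_T_iff)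
  then have "j = target (f b)" using realizableD[OF arr_realizable[OF g] _ _ j(2) fb(2,3)] by blast
  then show "a = b" using realizableD[OF arr_realizable[OF f] a b j(1) fb(1)] by simp
qed

lemma comp_idA_left: "comp idA f = f"
  by (simp add: fun_eq_iff comp_eq_postcomp idA_def postcomp_def)

lemma comp_idA_right: "comp f idA = f"
  by (simp add: fun_eq_iff comp_eq_postcomp idA_def postcomp_relabel[where \<rho> = "\<lambda>j. j"])

lemma comp_assoc: "comp (comp f g) h = comp f (comp g h)"
proof -
  have gh: "comp g h = (\<lambda>j. postcomp h (g j))" by (rule ext) (simp add: comp_eq_postcomp)
  show ?thesis by (simp add: fun_eq_iff comp_eq_postcomp postcomp_postcomp gh)
qed

lemma osum_target_le_iff:
  assumes f: "arr m n f" and g: "arr k l g" and i: "i \<in> {1..m+k}"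
    and t: "has_target (osum m n f g i)"
  shows "target (osum m n f g i) \<le> n \<longleftrightarrow> i \<le> m"
proof (cases "i \<le> m")
  case True
  then show ?thesis using arr_in_T[OF f] i t by (auto simp: osum_eq in_T_iff)
next
  case False
  then have "i - m \<in> {1..k}" using i by auto
  then have "in_T l (g (i - m))" using arr_in_T[OF g] by blast
  then show ?thesis using False t by (auto simp: osum_eq in_T_iff target_relabel)
qed

lemma arr_osum:
  assumes f: "arr m n f" and g: "arr k l g"
  shows "arr (m + k) (n + l) (osum m n f g)"
proof (rule arrI)
  fix i assume i: "i \<in> {1..m+k}"
  show "in_T (n + l) (osum m n f g i)"
  proof (cases "i \<le> m")
    case True
    then show ?thesis using arr_in_T[OF f] i in_T_mono[of n _ "n + l"] by (simp add: osum_eq)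
  next
    case False
    then have "i - m \<in> {1..k}" using i by auto
    then show ?thesis using arr_in_T[OF g] False in_T_relabel_shift by (simp add: osum_eq)
  qed
next
  fix a b q assume a: "a \<in> {1..m+k}" and b: "b \<in> {1..m+k}" and fa: "osum m n f g a = Nd q"
    and fb: "has_target (osum m n f g b)" "target (osum m n f g b) = q"
  have same_side: "a \<le> m \<longleftrightarrow> b \<le> m"
    using osum_target_le_iff[OF f g a] osum_target_le_iff[OF f g b fb(1)] fa fb(2) by simp
  show "a = b"
  proof (cases "a \<le> m")
    case True
    then have "a \<in> {1..m}" "b \<in> {1..m}" "f a = Nd q" "has_target (f b)" "target (f b) = q"
      using a b fa fb same_side by (auto simp: osum_eq)
    then show ?thesis using realizableD[OF arr_realizable[OF f]] by blast
  next
    case False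
    obtain j where j: "g (a - m) = Nd j" "q = n + j"
      using relabel_eq_Nd fa False by (fastforce simp: osum_eq)
    have "has_target (g (b - m))" "target (g (b - m)) = j"
      using fb False same_side j(2) by (auto simp: osum_eq target_relabel)
    moreover have "a - m \<in> {1..k}" "b - m \<in> {1..k}" using a b False same_side by auto
    ultimately have "a - m = b - m" using realizableD[OF arr_realizable[OF g] _ _ j(1)] by blast
    then show ?thesis using False same_side by simp
  qed
qed

lemma osum_idA: "arr_eq (m + n) (osum m m idA idA) idA"
  unfolding arr_eq_def by (simp add: osum_eq idA_def)

lemma osum_comp:
  assumes f: "arr m1 m2 f" and g: "arr m2 m3 g" and f': "arr k1 k2 f'" and g': "arr k2 k3 g'"
  shows "arr_eq (m1 + k1) (osum m1 m3 (comp f g) (comp f' g')) (comp (osum m1 m2 f f') (osum m2 m3 g g'))"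
  unfolding arr_eq_def
proof
  fix i assume i: "i \<in> {1..m1+k1}"
  show "osum m1 m3 (comp f g) (comp f' g') i = comp (osum m1 m2 f f') (osum m2 m3 g g') i"
  proof (cases "i \<le> m1")
    case True
    have "postcomp g (f i) = postcomp (osum m2 m3 g g') (f i)"
    proof (rule postcomp_cong)
      assume "has_target (f i)"
      then have "target (f i) \<le> m2" using arr_in_T[OF f, of i] i True by (auto simp: in_T_iff)
      then show "g (target (f i)) = osum m2 m3 g g' (target (f i))" by (simp add: osum_eq)
    qed
    then show ?thesis using True by (simp add: osum_eq comp_eq_postcomp)
  next
    case False
    let ?y = "f' (i - m1)"
    have im: "i - m1 \<in> {1..k1}" using i False by auto
    show ?thesis
    proof (cases "has_target ?y")
      case True
      have jn: "target ?y \<in> {1..k2}" using arr_in_T[OF f' im] True by (auto simp: in_T_iff)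
      have "postcomp (osum m2 m3 g g') (relabel (\<lambda>j. m2 + j) ?y) = prepend ?y (relabel (\<lambda>j. m3 + j) (g' (target ?y)))"
        using True jn by (simp add: postcomp_has_target target_relabel prepend_relabel osum_eq)
      also have "\<dots> = relabel (\<lambda>j. m3 + j) (postcomp g' ?y)"
        using True by (simp add: postcomp_has_target relabel_prepend)
      finally show ?thesis using False by (simp add: osum_eq comp_eq_postcomp)
    next
      case nd: False
      then show ?thesis
        using False by (cases ?y) (simp_all add: osum_eq comp_eq_postcomp postcomp_def)
    qed
  qed
qed

lemma osum_assoc: "arr_eq (m + k + p) (osum (m + k) (n + l) (osum m n f g) h) (osum m n f (osum k l g h))"
  unfolding arr_eq_def
proof
  fix i assume i: "i \<in> {1..m+k+p}"
  show "osum (m + k) (n + l) (osum m n f g) h i = osum m n f (osum k l g h) i"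
  proof (cases "i \<le> m")
    case True then show ?thesis by (simp add: osum_eq)
  next
    case False
    then show ?thesis
    proof (cases "i \<le> m + k")
      case True
      then have "i - m \<le> k" by simp
      then show ?thesis using True False by (simp add: osum_eq)
    next
      case F2: False
      have "i - m - k = i - (m + k)" "\<not> i - m \<le> k" using F2 by auto
      then show ?thesis using False F2 by (cases "h (i - (m + k))") (simp_all add: osum_eq)
    qed
  qed
qed

lemma osum_idA_right: "arr_eq m (osum m n f idA) f"
  unfolding arr_eq_def by (simp add: osum_eq)

lemma osum_0_left: "arr_eq m (osum 0 0 idA f) f"
  unfolding arr_eq_def by (simp add: osum_eq)

lemma arr_sym: "arr (m + n) (n + m) (sym m n)"
  by (rule arrI) (auto simp: sym_def in_T_def split: if_splits)

lemma sym_natural: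
  assumes f: "arr m n f" and g: "arr k l g"
  shows "arr_eq (m + k) (comp (osum m n f g) (sym n l)) (comp (sym m k) (osum k l g f))"
  unfolding arr_eq_def
proof
  fix i assume i: "i \<in> {1..m+k}"
  show "comp (osum m n f g) (sym n l) i = comp (sym m k) (osum k l g f) i"
  proof (cases "i \<le> m")
    case True
    then have "postcomp (sym n l) (f i) = relabel ((+) l) (f i)"
      using arr_in_T[OF f] i by (intro postcomp_relabel) (auto simp: sym_def in_T_iff)
    then show ?thesis using True i by (simp add: comp_eq_postcomp postcomp_def sym_def osum_eq)
  next
    case False
    then have "i - m \<in> {1..k}" using i by auto
    then have "in_T l (g (i - m))" using arr_in_T[OF g] by blast
    then have "postcomp (sym n l) (relabel ((+) n) (g (i - m))) = relabel (\<lambda>j. j - n) (relabel ((+) n) (g (i - m)))"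
      by (intro postcomp_relabel) (auto simp: sym_def in_T_iff target_relabel)
    then show ?thesis using False \<open>i - m \<in> {1..k}\<close>
      by (simp add: comp_eq_postcomp postcomp_def sym_def osum_eq relabel_relabel)
  qed
qed

lemma sym_inverse: "arr_eq (m + n) (comp (sym m n) (sym n m)) idA"
  unfolding arr_eq_def by (auto simp: comp_eq_postcomp postcomp_def sym_def idA_def)

lemma sym_hexagon: "arr_eq (m + n + k) (sym m (n + k)) (comp (osum (m + n) (n + m) (sym m n) idA) (osum n n idA (sym m k)))"
  unfolding arr_eq_def
proof
  fix i assume i: "i \<in> {1..m+n+k}"
  show "sym m (n + k) i = comp (osum (m + n) (n + m) (sym m n) idA) (osum n n idA (sym m k)) i"
  proof (cases "i \<le> m")
    case True then show ?thesis
      using i by (simp add: comp_eq_postcomp postcomp_def sym_def osum_eq idA_def)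
  next
    case False
    then show ?thesis
    proof (cases "i \<le> m + n")
      case True then show ?thesis
        using False by (simp add: comp_eq_postcomp postcomp_def sym_def osum_eq idA_def)
    next
      case F2: False
      then have "m < i - n" "n < i" by auto
      then show ?thesis
        using False F2 by (simp add: comp_eq_postcomp postcomp_def sym_def osum_eq idA_def)
    qed
  qed
qed

section \<open>The trace axioms\<close>

lemma trace_exec_range:
  assumes f: "arr (l + m) (l + n) f" and i: "i \<in> {1..m}"
  shows "in_T (l + n) (exec f {1..l} (l + i))"
    and "has_target (exec f {1..l} (l + i)) \<Longrightarrow> target (exec f {1..l} (l + i)) \<in> {l+1..l+n}"
proof -
  have "\<forall>z\<in>{1..l} \<union> {l + i}. in_T (l + n) (f z)" using arr_in_T[OF f] i by auto
  then show T: "in_T (l + n) (exec f {1..l} (l + i))" by (rule exec_in_T)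
  assume "has_target (exec f {1..l} (l + i))"
  then show "target (exec f {1..l} (l + i)) \<in> {l+1..l+n}"
    using T exec_target_notin[of f "{1..l}" "l + i"] by (auto simp: in_T_iff)
qed

lemma arr_trace:
  assumes f: "arr (l + m) (l + n) f"
  shows "arr m n (trace l n f)"
proof (rule arrI)
  fix i assume i: "i \<in> {1..m}"
  then show "in_T n (trace l n f i)"
    using trace_eq_exec[OF f i] trace_exec_range[OF f i]
    by (cases "exec f {1..l} (l + i)") (auto simp: in_T_def)
next
  fix a b k assume a: "a \<in> {1..m}" and b: "b \<in> {1..m}" and fa: "trace l n f a = Nd k"
    and fb: "has_target (trace l n f b)" "target (trace l n f b) = k"
  obtain p where p: "exec f {1..l} (l + a) = Nd p" "k = p - l"
    using fa trace_eq_exec[OF f a] relabel_eq_Nd by metis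
  have "has_target (exec f {1..l} (l + b))" "target (exec f {1..l} (l + b)) = p"
    using fb trace_eq_exec[OF f b] p trace_exec_range(2)[OF f a] trace_exec_range(2)[OF f b]
    by (auto simp: target_relabel)
  moreover have "l + a \<in> {1..l+m} - {1..l}" "l + b \<in> {1..l+m} - {1..l}" using a b by auto
  ultimately show "a = b"
    using realizable_exec_unique[OF arr_realizable[OF f], of "{1..l}" "l + a" "l + b"] p(1) by auto
qed

lemma trace_yanking: "arr_eq l (trace l l (sym l l)) idA"
  unfolding arr_eq_def
proof
  fix i assume i: "i \<in> {1..l}"
  have A: "arr (l + l) (l + l) (sym l l)" using arr_sym[of l l] .
  have s1: "sym l l (l + i) = Nd i" using i by (simp add: sym_def)
  have s2: "sym l l i = Nd (l + i)" using i by (simp add: sym_def)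
  have "exec (sym l l) {1..l} (l + i) = exec (sym l l) {1..l} i"
    using exec_step[of "{1..l}" "sym l l" "l + i"] s1 i by simp
  also have "\<dots> = Nd (l + i)" using exec_stop[of "{1..l}" "sym l l" i] s2 i by simp
  finally show "trace l l (sym l l) i = idA i" using trace_eq_exec[OF A i] by (simp add: idA_def)
qed

lemma trace_vanishing_0:
  assumes A: "arr m n f"
  shows "arr_eq m (trace 0 n f) f"
  unfolding arr_eq_def
proof
  fix i assume i: "i \<in> {1..m}"
  have A': "arr (0 + m) (0 + n) f" using A by simp
  have "exec f {1..0} (0 + i) = f i" using exec_stop[of "{1..0}" f i] by (simp add: lands_in_iff)
  then show "trace 0 n f i = f i" using trace_eq_exec[OF A' i] by (cases "f i") auto
qed

lemma trace_superposing:
  assumes A: "arr (l + m) (l + n) f" and g: "arr k p g"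
  shows "arr_eq (m + k) (trace l (n + p) (osum (l + m) (l + n) f g)) (osum m n (trace l n f) g)"
  unfolding arr_eq_def
proof
  fix i assume i: "i \<in> {1..m+k}"
  let ?F = "osum (l + m) (l + n) f g"
  have AF: "arr (l + (m + k)) (l + (n + p)) ?F" using arr_osum[OF A g] by (simp add: add.assoc)
  have tw: "trace l (n + p) ?F i = relabel (\<lambda>p. p - l) (exec ?F {1..l} (l + i))"
    using trace_eq_exec[OF AF i] .
  show "trace l (n + p) ?F i = osum m n (trace l n f) g i"
  proof (cases "i \<le> m")
    case True
    have im: "i \<in> {1..m}" using i True by simp
    have "exec ?F {1..l} (l + i) = exec f {1..l} (l + i)"
      using True by (intro exec_cong) (auto simp: osum_eq)
    then show ?thesis using tw trace_eq_exec[OF A im] True by (simp add: osum_eq)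
  next
    case False
    have "?F (l + i) = relabel ((+) (l + n)) (g (i - m))" using False by (simp add: osum_eq)
    moreover have "\<not> lands_in {1..l} (relabel ((+) (l + n)) (g (i - m)))"
    proof -
      have "i - m \<in> {1..k}" using i False by auto
      then have "in_T p (g (i - m))" using arr_in_T[OF g] by blast
      then show ?thesis by (cases "g (i - m)") (auto simp: in_T_def)
    qed
    ultimately have "exec ?F {1..l} (l + i) = relabel ((+) (l + n)) (g (i - m))"
      using exec_stop[of "{1..l}" ?F "l + i"] by simp
    then show ?thesis using tw False by (cases "g (i - m)") (auto simp: osum_eq)
  qed
qed

lemma exec_comp_osum_idA:
  assumes f: "arr (l + m) (l + n) f" and h: "arr n k h" and j: "j \<in> {1..m}"
  shows "exec (comp f (osum l l idA h)) {1..l} (l + j) = postcomp (osum l l idA h) (exec f {1..l} (l + j))"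
proof -
  let ?H = "osum l l idA h"
  have "exec (\<lambda>z. postcomp ?H (f z)) {1..l} (l + j) = postcomp ?H (exec f {1..l} (l + j))"
  proof (rule exec_postcomp[where X = "{1..l+m}"])
    show "\<forall>y\<in>{1..l}. ?H y = Nd y" by (simp add: osum_eq idA_def)
    show "\<forall>x\<in>{1..l+m}. has_target (f x) \<longrightarrow> target (f x) \<notin> {1..l} \<longrightarrow> \<not> lands_in {1..l} (?H (target (f x)))"
    proof (intro ballI impI)
      fix x assume x: "x \<in> {1..l+m}" and "has_target (f x)" "target (f x) \<notin> {1..l}"
      then have p: "l < target (f x)" "target (f x) - l \<in> {1..n}"
        using arr_in_T[OF f x] by (auto simp: in_T_iff)
      then show "\<not> lands_in {1..l} (?H (target (f x)))"
        using arr_in_T[OF h p(2)] by (cases "h (target (f x) - l)") (auto simp: osum_eq in_T_def)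
    qed
  qed (use j in auto)
  moreover have "comp f ?H = (\<lambda>z. postcomp ?H (f z))" by (simp add: fun_eq_iff comp_eq_postcomp)
  ultimately show ?thesis by simp
qed

lemma relabel_postcomp_osum_idA:
  "(has_target e \<Longrightarrow> l < target e) \<Longrightarrow>
     relabel (\<lambda>p. p - l) (postcomp (osum l l idA h) e) = postcomp h (relabel (\<lambda>p. p - l) e)"
  by (cases e; cases "h (target e - l)") (auto simp: postcomp_def osum_eq)

lemma trace_tightening:
  assumes g: "arr m m' g" and f: "arr (l + m') (l + n') f" and h: "arr n' n h"
  shows "arr_eq m (trace l n (comp (comp (osum l l idA g) f) (osum l l idA h))) (comp (comp g (trace l n' f)) h)"
  unfolding arr_eq_def
proof
  fix i assume i: "i \<in> {1..m}"
  let ?G = "osum l l idA g" and ?H = "osum l l idA h"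
  let ?\<Phi> = "comp (comp ?G f) ?H" and ?C = "{1..l}"
  have \<Phi>: "arr (l + m) (l + n) ?\<Phi>"
    using arr_comp[OF arr_comp[OF arr_osum[OF arr_idA g] f] arr_osum[OF arr_idA h]] .
  have \<Phi>_eq: "?\<Phi> x = postcomp ?H (postcomp f (?G x))" for x by (simp add: comp_eq_postcomp)
  show "trace l n ?\<Phi> i = comp (comp g (trace l n' f)) h i"
  proof (cases "has_target (g i)")
    case False
    then have "?\<Phi> (l + i) = g i" using i \<Phi>_eq by (cases "g i") (auto simp: osum_eq postcomp_def)
    then have "exec ?\<Phi> ?C (l + i) = g i" using False exec_stop lands_in_has_target by metis
    then show ?thesis
      using trace_eq_exec[OF \<Phi> i] False by (cases "g i") (auto simp: comp_eq_postcomp)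
  next
    case True
    let ?j = "target (g i)"
    have j: "?j \<in> {1..m'}" using arr_in_T[OF g i] True by (simp add: in_T_iff)
    have "?\<Phi> (l + i) = postcomp ?H (postcomp f (relabel ((+) l) (g i)))"
      using \<Phi>_eq i by (simp add: osum_eq)
    also have "\<dots> = prepend (g i) (comp f ?H (l + ?j))"
      using True
        by (simp add: comp_eq_postcomp postcomp_has_target target_relabel prepend_relabel postcomp_prepend)
    finally have "exec ?\<Phi> ?C (l + i) = prepend (g i) (exec (comp f ?H) ?C (l + ?j))"
      using True
        by (intro exec_cong_prepend) (auto simp: comp_eq_postcomp osum_eq idA_def postcomp_def)
    also have "\<dots> = prepend (g i) (postcomp ?H (exec f ?C (l + ?j)))"
      using exec_comp_osum_idA[OF f h j] by simp
    finally have exec_\<Phi>: "exec ?\<Phi> ?C (l + i) = prepend (g i) (postcomp ?H (exec f ?C (l + ?j)))" .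
    have "has_target (exec f ?C (l + ?j)) \<Longrightarrow> l < target (exec f ?C (l + ?j))"
      using trace_exec_range(2)[OF f j] by auto
    then have "relabel (\<lambda>p. p - l) (prepend (g i) (postcomp ?H (exec f ?C (l + ?j))))
        = postcomp h (prepend (g i) (relabel (\<lambda>p. p - l) (exec f ?C (l + ?j))))"
      using True relabel_postcomp_osum_idA
        by (simp add: relabel_prepend[symmetric] postcomp_prepend)
    then show ?thesis using trace_eq_exec[OF \<Phi> i] trace_eq_exec[OF f j] exec_\<Phi> True
      by (simp add: comp_eq_postcomp postcomp_has_target)
  qed
qed

lemma trace_vanishing_add:
  assumes A: "arr (l + l' + m) (l + l' + n) f"
  shows "arr_eq m (trace (l + l') n f) (trace l' n (trace l (l' + n) f))"
  unfolding arr_eq_def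
proof
  fix i assume i: "i \<in> {1..m}"
  have A1: "arr (l + (l' + m)) (l + (l' + n)) f" using A by (simp add: add.assoc)
  let ?T1 = "trace l (l' + n) f"
  have aT: "arr (l' + m) (l' + n) ?T1" using arr_trace[OF A1] .
  have LHS: "trace (l + l') n f i = relabel (\<lambda>p. p - (l + l')) (exec f {1..l+l'} (l + l' + i))"
    using trace_eq_exec[OF A i] .
  have RHS: "trace l' n ?T1 i = relabel (\<lambda>p. p - l') (exec ?T1 {1..l'} (l' + i))"
    using trace_eq_exec[OF aT i] .
  have im: "((+) l) ` {1..l'} = {1..l+l'} - {1..l}"
  proof
    show "((+) l) ` {1..l'} \<subseteq> {1..l+l'} - {1..l}" by auto
    show "{1..l+l'} - {1..l} \<subseteq> ((+) l) ` {1..l'}"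
    proof
      fix x assume "x \<in> {1..l+l'} - {1..l}"
      then have "x = l + (x - l)" "x - l \<in> {1..l'}" by auto
      then show "x \<in> ((+) l) ` {1..l'}" by blast
    qed
  qed
  have key: "exec f {1..l} (l + x) = relabel ((+) l) (?T1 x)" if x: "x \<in> {1..l'+m}" for x
  proof -
    let ?E = "exec f {1..l} (l + x)"
    have "?T1 x = relabel (\<lambda>p. p - l) ?E" using trace_eq_exec[OF A1 x] .
    moreover have "has_target ?E \<Longrightarrow> target ?E \<in> {l+1..l+(l'+n)}"
      using trace_exec_range(2)[OF A1 x] by simp
    ultimately show ?thesis by (cases ?E) auto
  qed
  have inj: "inj (\<lambda>x::nat. l + x)" by (simp add: inj_on_def)
  have "exec (exec f {1..l}) (((+) l) ` {1..l'}) (l + (l' + i)) = prepend (Nd 0) (relabel ((+) l) (exec ?T1 {1..l'} (l' + i)))"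
    using key i by (intro exec_relabel[OF inj]) auto
  then have "exec f {1..l+l'} (l + l' + i) = relabel ((+) l) (exec ?T1 {1..l'} (l' + i))"
    using exec_nested[of "{1..l+l'}" "{1..l}" f "l + (l' + i)"] im by (simp add: add.assoc)
  then show "trace (l + l') n f i = trace l' n ?T1 i" using LHS RHS
    by (cases "exec ?T1 {1..l'} (l' + i)") auto
qed

text \<open>Both sides of the sliding axiom are executions of one wiring on doubled nodes:
  node \<open>2 * x\<close> carries \<open>f x\<close>, whose outputs \<open>y \<le> l'\<close> are redirected to the odd node
  \<open>2 * y + 1\<close> carrying \<open>g y\<close>. Executing away the odd internal nodes first yields
  \<open>comp f (osum l' l g idA)\<close>, executing away the even ones first yields
  \<open>comp (osum l' l g idA) f\<close>, and by nested execution both agree with executing all at once.\<close>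

context
  fixes l l' m n :: nat and f g :: "nat \<Rightarrow> tval"
  assumes f: "arr (l + m) (l' + n) f" and g: "arr l' l g"
begin

definition slide_out :: "nat \<Rightarrow> nat" where
  "slide_out y = (if y \<le> l' then 2 * y + 1 else 2 * (l + y - l'))"

definition slide_wiring :: "nat \<Rightarrow> tval" where
  "slide_wiring z =
     (if even z then relabel slide_out (f (z div 2)) else relabel ((*) 2) (osum l' l g idA (z div 2)))"

lemma slide_wiring_even: "slide_wiring (2 * x) = relabel slide_out (f x)"
  by (simp add: slide_wiring_def)

lemma slide_wiring_odd: "slide_wiring (Suc (2 * y)) = relabel ((*) 2) (osum l' l g idA y)"
  by (simp add: slide_wiring_def)

lemma inj_slide_out: "inj slide_out"
  unfolding inj_on_def slide_out_def by (auto split: if_splits) presburger+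

lemma slide_out_image: "slide_out ` {1..l'} = (\<lambda>y. 2 * y + 1) ` {1..l'}"
  unfolding slide_out_def by (auto simp: image_iff)

lemma not_lands_in_even_slide_out: "x \<in> {1..l+m} \<Longrightarrow> \<not> lands_in ((*) 2 ` {1..l}) (relabel slide_out (f x))"
  using arr_in_T[OF f, of x] unfolding slide_out_def
  by (cases "f x") (auto simp: in_T_iff split: if_splits, presburger+)

lemma not_lands_in_odd_double: "\<not> lands_in (slide_out ` {1..l'}) (relabel ((*) 2) z)"
  unfolding slide_out_image by (cases z) (auto, presburger+)

lemma exec_slide_odd:
  assumes x: "x \<in> {1..l+m}"
  shows "exec slide_wiring (slide_out ` {1..l'}) (2 * x) = relabel ((*) 2) (comp f (osum l' l g idA) x)"
proof (cases "has_target (f x)")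
  case False
  then show ?thesis using exec_stop[of _ slide_wiring "2 * x"] slide_wiring_even
    by (cases "f x") (auto simp: comp_eq_postcomp)
next
  case True
  let ?y = "target (f x)"
  have y: "?y \<in> {1..l'+n}" using arr_in_T[OF f x] True by (simp add: in_T_iff)
  show ?thesis
  proof (cases "?y \<le> l'")
    case yl: True
    have t: "lands_in (slide_out ` {1..l'}) (slide_wiring (2 * x))"
      using True yl y by (simp add: slide_wiring_even lands_in_iff target_relabel)
    have "target (slide_wiring (2 * x)) = 2 * ?y + 1"
      using True yl by (simp add: slide_wiring_even target_relabel slide_out_def)
    moreover have "exec slide_wiring (slide_out ` {1..l'}) (2 * ?y + 1) = relabel ((*) 2) (g ?y)"
      using exec_stop[of "slide_out ` {1..l'}" slide_wiring "2 * ?y + 1"] not_lands_in_odd_double yl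
      by (simp add: slide_wiring_odd osum_eq)
    ultimately have "exec slide_wiring (slide_out ` {1..l'}) (2 * x) = prepend (f x) (relabel ((*) 2) (g ?y))"
      using exec_step[of _ slide_wiring "2 * x", OF t]
        by (simp add: slide_wiring_even prepend_relabel)
    then show ?thesis
      using True yl by (simp add: comp_eq_postcomp postcomp_has_target relabel_prepend osum_eq)
  next
    case yl: False
    have "\<not> lands_in (slide_out ` {1..l'}) (slide_wiring (2 * x))"
      using True yl unfolding slide_out_image
      by (auto simp: slide_wiring_even lands_in_iff target_relabel slide_out_def) presburger
    then have "exec slide_wiring (slide_out ` {1..l'}) (2 * x) = relabel slide_out (f x)"
      using exec_stop slide_wiring_even by metis
    moreover have "osum l' l g idA ?y = Nd (l + (?y - l'))" using yl by (simp add: osum_eq idA_def)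
    ultimately show ?thesis using True yl
      by (cases "f x") (auto simp: comp_eq_postcomp postcomp_has_target slide_out_def)
  qed
qed

lemma exec_slide_even:
  assumes y: "y \<in> {1..l'}"
  shows "exec slide_wiring ((*) 2 ` {1..l}) (slide_out y) = relabel slide_out (comp (osum l' l g idA) f y)"
proof -
  have sy: "slide_out y = 2 * y + 1" and Gy: "osum l' l g idA y = g y"
    using y by (simp_all add: slide_out_def osum_eq)
  show ?thesis
  proof (cases "has_target (g y)")
    case False
    then have "\<not> lands_in ((*) 2 ` {1..l}) (slide_wiring (slide_out y))"
      using sy Gy by (simp add: slide_wiring_odd lands_in_iff)
    then show ?thesis using exec_stop False sy Gy
      by (cases "g y") (auto simp: slide_wiring_odd comp_eq_postcomp postcomp_def)
  next
    case True
    let ?z = "target (g y)"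
    have z: "?z \<in> {1..l}" using arr_in_T[OF g y] True by (simp add: in_T_iff)
    have t: "lands_in ((*) 2 ` {1..l}) (slide_wiring (slide_out y))"
      using sy Gy True z by (simp add: slide_wiring_odd lands_in_iff target_relabel)
    have "target (slide_wiring (slide_out y)) = 2 * ?z"
      using sy Gy True by (simp add: slide_wiring_odd target_relabel)
    moreover have "exec slide_wiring ((*) 2 ` {1..l}) (2 * ?z) = relabel slide_out (f ?z)"
      using exec_stop[of "(*) 2 ` {1..l}" slide_wiring "2 * ?z"] not_lands_in_even_slide_out[of ?z] z
      unfolding slide_wiring_even by simp
    ultimately have "exec slide_wiring ((*) 2 ` {1..l}) (slide_out y) = prepend (g y) (relabel slide_out (f ?z))"
      using exec_step[of _ slide_wiring "slide_out y", OF t] sy Gy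
        by (simp add: slide_wiring_odd prepend_relabel)
    then show ?thesis
      using True Gy by (simp add: comp_eq_postcomp postcomp_has_target relabel_prepend)
  qed
qed

lemma exec_slide_input:
  assumes i: "i \<in> {1..m}"
  shows "exec slide_wiring ((*) 2 ` {1..l}) (2 * (l + i)) = relabel slide_out (comp (osum l' l g idA) f (l' + i))"
proof -
  have "exec slide_wiring ((*) 2 ` {1..l}) (2 * (l + i)) = relabel slide_out (f (l + i))"
    using exec_stop[of "(*) 2 ` {1..l}" slide_wiring "2 * (l + i)"] not_lands_in_even_slide_out[of "l + i"] i
    unfolding slide_wiring_even by simp
  moreover have "osum l' l g idA (l' + i) = Nd (l + i)" using i by (simp add: osum_eq idA_def)
  ultimately show ?thesis by (simp add: comp_eq_postcomp postcomp_def)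
qed

lemma trace_sliding:
  "arr_eq m (trace l n (comp f (osum l' l g idA))) (trace l' n (comp (osum l' l g idA) f))"
  unfolding arr_eq_def
proof
  fix i assume i: "i \<in> {1..m}"
  let ?G = "osum l' l g idA" and ?A = "(*) 2 ` {1..l}" and ?B = "slide_out ` {1..l'}"
  let ?X = "exec (comp f ?G) {1..l} (l + i)" and ?Y = "exec (comp ?G f) {1..l'} (l' + i)"
  have AB: "?A \<inter> ?B = {}" unfolding slide_out_image by (auto, presburger)
  have fin: "finite (?A \<union> ?B)" by simp
  have "exec (exec slide_wiring ?B) ?A (2 * (l + i)) = prepend (Nd 0) (relabel ((*) 2) ?X)"
  proof (rule exec_relabel)
    show "exec slide_wiring ?B (2 * (l + i)) = prepend (Nd 0) (relabel ((*) 2) (comp f ?G (l + i)))"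
      using exec_slide_odd[of "l + i"] i by simp
  qed (use exec_slide_odd in \<open>auto simp: inj_on_def\<close>)
  moreover have "exec (exec slide_wiring ?A) ?B (2 * (l + i)) = prepend (Nd 0) (relabel slide_out ?Y)"
  proof (rule exec_relabel[OF inj_slide_out])
    show "exec slide_wiring ?A (2 * (l + i)) = prepend (Nd 0) (relabel slide_out (comp ?G f (l' + i)))"
      using exec_slide_input[OF i] by simp
  qed (use exec_slide_even in auto)
  moreover have "?A = (?A \<union> ?B) - ?B" "?B = (?A \<union> ?B) - ?A" using AB by blast+
  ultimately have XY: "relabel ((*) 2) ?X = relabel slide_out ?Y"
    using exec_nested[OF fin, of ?B] exec_nested[OF fin, of ?A]
      by (metis prepend.simps(2) sup.cobounded1 sup.cobounded2)
  have "has_target ?Y \<Longrightarrow> target ?Y \<in> {l'+1..l'+n}"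
    using trace_exec_range(2)[OF arr_comp[OF arr_osum[OF g arr_idA] f] i] by simp
  then show "trace l n (comp f ?G) i = trace l' n (comp ?G f) i"
    using XY trace_eq_exec[OF arr_comp[OF f arr_osum[OF g arr_idA]] i]
      trace_eq_exec[OF arr_comp[OF arr_osum[OF g arr_idA] f] i]
    by (cases ?X; cases ?Y) (auto simp: slide_out_def split: if_splits)
qed

end

lemma arr_eq_refl: "arr_eq m f f"
  by (simp add: arr_eq_def)

theorem proposition4p3:
  shows "traced_smc"
  unfolding traced_smc_def
  by (intro conjI allI impI)
    (simp_all add: arr_eq_refl arr_idA arr_comp comp_idA_left comp_idA_right comp_assoc[symmetric]
      arr_osum osum_idA osum_comp osum_assoc osum_idA_right osum_0_left
      arr_sym sym_natural sym_inverse sym_hexagon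
      arr_trace trace_tightening trace_sliding trace_vanishing_0 trace_vanishing_add
      trace_superposing trace_yanking)

end
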